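(* Let $A$ be a set and let $\iota:T(T_{\ge1}(A))\to H_{\mathcal S}(A)$ be the algebra morphism sending each nonempty word $w=a_1\cdots a_n$ to $\iota(w)=\sum_{T}T\otimes a_1\cdots a_n$, the sum over all reduced plane trees $T$ with $n+1$ leaves, decorated by $a_1,\dots,a_n$ from left to right. Then (i) $\iota$ is a coalgebra morphism: $\Delta\circ\iota=(\iota\otimes\iota)\circ\Delta$; (ii) $\iota$ is a codendriform morphism: for every nonempty word $w$, $(\iota\otimes\iota)\circ\Delta_{\prec}(w)=\Delta_{\prec}\circ\iota(w)$.
   Context: $T(T_{\ge1}(A))$ is the free associative algebra over $\mathbb{C}$ on the nonempty words over $A$; its elements are linear combinations of segmented words $w_1|\cdots|w_s$ (the product being the bar concatenation, the empty segmented word being the unit $1$). For a word $w=a_1\cdots a_n$ and $S=\{i_1<\dots<i_k\}\subseteq\{1,\dots,n\}$, put $R^S(w)=a_{i_1}\cdots a_{i_k}$ ($=1$ if $S=\emptyset$) and $P^S(w)=a_{J_1}|\cdots|a_{J_l}$, where $J_1,\dots,J_l$ are the maximal intervals of $\{1,\dots,n\}\setminus S$ in increasing order and $a_J$ is the subword of letters with indices in $J$ ($P^S(w)=1$ if $S=\{1,\dots,n\}$). The coproduct is $\Delta(w)=\sum_{S}R^S(w)\otimes P^S(w)$, extended multiplicatively, and $\Delta^+_{\prec}(w)=\sum_{S\ni n}R^S(w)\otimes P^S(w)$; $\Delta_{\prec}(w)=\Delta^+_{\prec}(w)-w\otimes1$. A reduced plane tree is a rooted plane tree in which every internal node has at least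 two children; its weight is its number of leaves minus 1. For a tree with leaves $\ell_1,\dots,\ell_{n+1}$, the $i$th sector is seen by the lowest common ancestor of $\ell_i,\ell_{i+1}$. $H_{\mathcal S}(A)$ has basis the finite products (concatenations) of $A$-decorated trees $T\otimes a_1\cdots a_n$ (a tree of weight $n\ge1$ with sectors labeled left to right by $a_1,\dots,a_n$), unit $1$ the empty product. An admissible cut of $T$ is a (possibly empty) set $c$ of internal vertices with at most one vertex on each root-to-leaf path; $P^c(T)$ is the left-to-right product of the subtrees rooted at vertices of $c$, each decorated by the letters of the sectors seen by its vertices (in order), and $R^c(T)$ is $T$ with these subtrees replaced by leaves, decorated by the letters of the sectors seen by its remaining internal vertices. $\Delta(T\otimes w)=\sum_cR^c(T)\otimes P^c(T)$, extended multiplicatively; $\Delta^+_{\prec}(T\otimes w)$ is the same sum restricted to cuts for which the rightmost leaf of $T$ stays in $R^c(T)$, and for $x$ a linear combination of decorated trees, $\Delta_{\prec}(x)=\Delta^+_{\prec}(x)-x\otimes1$. *)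

theory Defs
  imports Complex_Main "HOL-Library.Sublist"
begin

text \<open>An element of the free vector space on a basis 'b is a function 'b => complex
  (of finite support). Linear extension of a map given on basis elements:\<close>
definition lin :: "('b \<Rightarrow> 'c \<Rightarrow> complex) \<Rightarrow> ('b \<Rightarrow> complex) \<Rightarrow> 'c \<Rightarrow> complex" where
  "lin f x = (\<lambda>c. \<Sum>b\<in>{b. x b \<noteq> 0}. x b * f b c)"

text \<open>Free monoid algebras: basis = lists, product induced by concatenation.\<close>
definition vmult :: "('b list \<Rightarrow> complex) \<Rightarrow> ('b list \<Rightarrow> complex) \<Rightarrow> 'b list \<Rightarrow> complex" where
  "vmult x y = (\<lambda>c. \<Sum>i\<le>length c. x (take i c) * y (drop i c))"

definition vone :: "'b list \<Rightarrow> complex" where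
  "vone = (\<lambda>c. if c = [] then 1 else 0)"

text \<open>Tensor square of such an algebra: basis = pairs of lists, componentwise product.\<close>
definition tmult :: "('b list \<times> 'c list \<Rightarrow> complex) \<Rightarrow> ('b list \<times> 'c list \<Rightarrow> complex)
    \<Rightarrow> 'b list \<times> 'c list \<Rightarrow> complex" where
  "tmult x y = (\<lambda>(c, d). \<Sum>i\<le>length c. \<Sum>j\<le>length d.
       x (take i c, take j d) * y (drop i c, drop j d))"

definition tone :: "'b list \<times> 'c list \<Rightarrow> complex" where
  "tone = (\<lambda>(c, d). if c = [] \<and> d = [] then 1 else 0)"

definition tens1 :: "('b list \<Rightarrow> complex) \<Rightarrow> 'b list \<times> 'c list \<Rightarrow> complex" where
  "tens1 x = (\<lambda>(p, q). x p * vone q)"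

text \<open>Basis: segmented words w1|...|ws, represented as lists of nonempty words.
  Indices of letters are 0-based.\<close>

fun cutw :: "nat set \<Rightarrow> nat \<Rightarrow> 'a list \<Rightarrow> 'a list list" where
  "cutw S i [] = [[]]"
| "cutw S i (a # w) = (if i \<in> S then [] # cutw S (Suc i) w
      else (case cutw S (Suc i) w of [] \<Rightarrow> [[a]] | r # rs \<Rightarrow> (a # r) # rs))"

text \<open>P^S(w): the maximal intervals of the complement of S, in increasing order.\<close>
definition Pw :: "nat set \<Rightarrow> 'a list \<Rightarrow> 'a list list" where
  "Pw S w = filter (\<lambda>u. u \<noteq> []) (cutw S 0 w)"

text \<open>R^S(w) as an element of T(T_{>=1}(A)) (the empty word being the unit).\<close>
definition Rw :: "nat set \<Rightarrow> 'a list \<Rightarrow> 'a list list" where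
  "Rw S w = (let u = nths w S in if u = [] then [] else [u])"

definition DW :: "'a list \<Rightarrow> 'a list list \<times> 'a list list \<Rightarrow> complex" where
  "DW w = (\<lambda>pq. of_nat (card {S. S \<subseteq> {..<length w} \<and> (Rw S w, Pw S w) = pq}))"

definition DWplus :: "'a list \<Rightarrow> 'a list list \<times> 'a list list \<Rightarrow> complex" where
  "DWplus w = (\<lambda>pq. of_nat (card {S. S \<subseteq> {..<length w} \<and> length w - 1 \<in> S
                                     \<and> (Rw S w, Pw S w) = pq}))"

definition DWprec :: "'a list \<Rightarrow> 'a list list \<times> 'a list list \<Rightarrow> complex" where
  "DWprec w = (\<lambda>pq. DWplus w pq - tens1 (\<lambda>b. if b = [w] then 1 else 0) pq)"

definition DT :: "'a list list \<Rightarrow> 'a list list \<times> 'a list list \<Rightarrow> complex" where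
  "DT ws = foldr (\<lambda>w acc. tmult (DW w) acc) ws tone"

datatype ptree = Nd "ptree list"   \<comment> \<open>a leaf is Nd []\<close>

fun leaves :: "ptree \<Rightarrow> nat" where
  "leaves (Nd ts) = (if ts = [] then 1 else sum_list (map leaves ts))"

fun reduced :: "ptree \<Rightarrow> bool" where
  "reduced (Nd ts) = ((ts = [] \<or> 2 \<le> length ts) \<and> (\<forall>t\<in>set ts. reduced t))"

text \<open>Plane trees whose internal vertices carry the letters of the sectors they see:
  a vertex with k children sees k-1 sectors (between consecutive children).\<close>
datatype 'a stree = SN "'a stree list" "'a list"

fun shape :: "'a stree \<Rightarrow> ptree" where
  "shape (SN ts l) = Nd (map shape ts)"

fun swf :: "'a stree \<Rightarrow> bool" where
  "swf (SN ts l) = (length l = length ts - 1 \<and> (\<forall>t\<in>set ts. swf t))"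

fun ilv :: "'a list list \<Rightarrow> 'a list \<Rightarrow> 'a list" where
  "ilv [] l = []"
| "ilv [r] l = r"
| "ilv (r # rs) (a # l) = r @ a # ilv rs l"
| "ilv (r # rs) [] = r @ concat rs"

text \<open>Left-to-right reading of the sector letters.\<close>
fun reading :: "'a stree \<Rightarrow> 'a list" where
  "reading (SN ts l) = ilv (map reading ts) l"

text \<open>Vertices are addressed by paths of child indices.\<close>
fun sub :: "'a stree \<Rightarrow> nat list \<Rightarrow> 'a stree option" where
  "sub s [] = Some s"
| "sub (SN ts l) (i # p) = (if i < length ts then sub (ts ! i) p else None)"

definition internalv :: "'a stree \<Rightarrow> nat list set" where
  "internalv s = {p. \<exists>ts l. sub s p = Some (SN ts l) \<and> ts \<noteq> []}"

definition leafv :: "'a stree \<Rightarrow> nat list set" where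
  "leafv s = {p. \<exists>l. sub s p = Some (SN [] l)}"

text \<open>Admissible cut: set of internal vertices with at most one vertex on each
  root-to-leaf path (the path to leaf p consists of the prefixes of p).\<close>
definition adm :: "'a stree \<Rightarrow> nat list set \<Rightarrow> bool" where
  "adm s c = (c \<subseteq> internalv s \<and> (\<forall>q\<in>leafv s. card {p\<in>c. prefix p q} \<le> 1))"

text \<open>R^c: replace the subtrees rooted at vertices of c by leaves.\<close>
function cutR :: "nat list set \<Rightarrow> 'a stree \<Rightarrow> 'a stree" where
  "cutR c (SN ts l) = (if [] \<in> c then SN [] []
     else SN (map (\<lambda>(i, t). cutR {p. i # p \<in> c} t) (zip [0..<length ts] ts)) l)"
  by pat_completeness auto
termination
  by (relation "measure (\<lambda>(c, s). size s)")
     (auto dest!: set_zip_rightD intro: le_imp_less_Suc trans_le_add1 size_list_estimation')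

text \<open>P^c: the subtrees rooted at vertices of c, from left to right.\<close>
function cutP :: "nat list set \<Rightarrow> 'a stree \<Rightarrow> 'a stree list" where
  "cutP c (SN ts l) = (if [] \<in> c then [SN ts l]
     else concat (map (\<lambda>(i, t). cutP {p. i # p \<in> c} t) (zip [0..<length ts] ts)))"
  by pat_completeness auto
termination
  by (relation "measure (\<lambda>(c, s). size s)")
     (auto dest!: set_zip_rightD intro: le_imp_less_Suc trans_le_add1 size_list_estimation')

fun on_right :: "'a stree \<Rightarrow> nat list \<Rightarrow> bool" where
  "on_right s [] = True"
| "on_right (SN ts l) (i # p) = (ts \<noteq> [] \<and> i = length ts - 1 \<and> on_right (ts ! i) p)"

text \<open>A decorated tree T \<otimes> a1...an is the pair (T, a1...an).  The basis of H_S(A)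
  consists of lists (products) of such pairs; the empty list is the unit.\<close>
type_synonym 'a dtree = "ptree \<times> 'a list"

definition dec :: "'a stree \<Rightarrow> 'a dtree" where
  "dec s = (shape s, reading s)"

text \<open>A decorated tree as basis element of H_S(A); the tree of weight 0 (a leaf) is 1.\<close>
definition tob :: "'a stree \<Rightarrow> 'a dtree list" where
  "tob s = (if shape s = Nd [] then [] else [dec s])"

definition DHtree :: "'a dtree \<Rightarrow> 'a dtree list \<times> 'a dtree list \<Rightarrow> complex" where
  "DHtree Tw = (\<lambda>pq. of_nat (card {(s, c). swf s \<and> dec s = Tw \<and> adm s c
        \<and> (tob (cutR c s), map dec (cutP c s)) = pq}))"

definition DHplustree :: "'a dtree \<Rightarrow> 'a dtree list \<times> 'a dtree list \<Rightarrow> complex" where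
  "DHplustree Tw = (\<lambda>pq. of_nat (card {(s, c). swf s \<and> dec s = Tw \<and> adm s c
        \<and> (\<forall>p\<in>c. \<forall>q\<in>leafv s. on_right s q \<longrightarrow> \<not> prefix p q)
        \<and> (tob (cutR c s), map dec (cutP c s)) = pq}))"

definition DH :: "'a dtree list \<Rightarrow> 'a dtree list \<times> 'a dtree list \<Rightarrow> complex" where
  "DH h = foldr (\<lambda>t acc. tmult (DHtree t) acc) h tone"

text \<open>Delta^+_< on single decorated trees (only applied to linear combinations of trees).\<close>
definition DHplus1 :: "'a dtree list \<Rightarrow> 'a dtree list \<times> 'a dtree list \<Rightarrow> complex" where
  "DHplus1 h = (case h of [t] \<Rightarrow> DHplustree t | _ \<Rightarrow> (\<lambda>_. 0))"

definition DHprec :: "('a dtree list \<Rightarrow> complex) \<Rightarrow> 'a dtree list \<times> 'a dtree list \<Rightarrow> complex" where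
  "DHprec x = (\<lambda>pq. lin DHplus1 x pq - tens1 x pq)"

definition iota_word :: "'a list \<Rightarrow> 'a dtree list \<Rightarrow> complex" where
  "iota_word w = (\<lambda>h. if \<exists>T. h = [(T, w)] \<and> reduced T \<and> leaves T = length w + 1 then 1 else 0)"

definition iota :: "'a list list \<Rightarrow> 'a dtree list \<Rightarrow> complex" where
  "iota ws = foldr (\<lambda>w acc. vmult (iota_word w) acc) ws vone"

definition iota2 :: "'a list list \<times> 'a list list \<Rightarrow> 'a dtree list \<times> 'a dtree list \<Rightarrow> complex" where
  "iota2 = (\<lambda>(u, v). \<lambda>(p, q). iota u p * iota v q)"

end

theory Submission
  imports Defs
begin

text \<open>
  Everything is linear, and \<open>\<iota>\<close>, \<open>\<Delta>\<close> are multiplicative, so it suffices to treat the image of a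
  single nonempty word \<open>w\<close>.  The coefficient of \<open>p \<otimes> q\<close> in \<open>\<Delta>(\<iota>(w))\<close> counts pairs of a
  reduced tree \<open>T\<close> reading \<open>w\<close> and an admissible cut \<open>c\<close>.  Cutting \<open>T\<close> along \<open>c\<close> is a bijection
  onto pairs of a tree \<open>r = R^c(T)\<close> and a forest with one tree per leaf of \<open>r\<close> (a bare leaf where
  nothing was cut).  Reading the glued tree and marking the letters seen by \<open>r\<close> determines a
  set \<open>S\<close> of positions of \<open>w\<close>: the marked letters spell \<open>R^S(w)\<close> and the maximal runs of unmarked
  letters are the blocks of \<open>P^S(w)\<close>.  For fixed \<open>S\<close>, \<open>r\<close> and the forest vary independently over
  decorated reduced trees with prescribed readings, which \<open>\<iota>(R^S(w))\<close> and \<open>\<iota>(P^S(w))\<close> count.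
  Summing over \<open>S\<close> gives \<open>(\<iota> \<otimes> \<iota>)(\<Delta>(w))\<close>.  For \<open>\<Delta>\<^sup>+\<^sub>\<prec>\<close> the same count applies, since the
  rightmost leaf of \<open>T\<close> stays in \<open>R^c\<close> exactly when the last letter of \<open>w\<close> is marked.
\<close>

section \<open>Finitely supported linear combinations\<close>

definition supp :: "('b \<Rightarrow> complex) \<Rightarrow> 'b set" where
  "supp x = {b. x b \<noteq> 0}"

definition delta :: "'b \<Rightarrow> 'b \<Rightarrow> complex" where
  "delta a = (\<lambda>c. if c = a then 1 else 0)"

lemma sum_eq_single:
  "finite A \<Longrightarrow> a \<in> A \<Longrightarrow> (\<And>i. i \<in> A \<Longrightarrow> i \<noteq> a \<Longrightarrow> f i = 0) \<Longrightarrow> sum f A = f a"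
  using sum.mono_neutral_right[of A "{a}" f] by auto

lemma lin_superset: "finite Y \<Longrightarrow> supp x \<subseteq> Y \<Longrightarrow> lin f x = (\<lambda>c. \<Sum>b\<in>Y. x b * f b c)"
  unfolding lin_def supp_def by (intro ext sum.mono_neutral_left) auto

lemma lin_add:
  assumes "finite (supp x)" "finite (supp y)"
  shows "lin f (\<lambda>c. x c + y c) = (\<lambda>d. lin f x d + lin f y d)"
proof -
  let ?Y = "supp x \<union> supp y"
  have "supp (\<lambda>c. x c + y c) \<subseteq> ?Y" by (auto simp: supp_def)
  then show ?thesis
    using assms lin_superset[of ?Y x f] lin_superset[of ?Y y f] lin_superset[of ?Y "\<lambda>c. x c + y c" f]
    by (simp add: distrib_right sum.distrib)
qed

lemma lin_diff:
  assumes "finite (supp x)" "finite (supp y)"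
  shows "lin f (\<lambda>c. x c - y c) = (\<lambda>d. lin f x d - lin f y d)"
proof -
  let ?Y = "supp x \<union> supp y"
  have "supp (\<lambda>c. x c - y c) \<subseteq> ?Y" by (auto simp: supp_def)
  then show ?thesis
    using assms lin_superset[of ?Y x f] lin_superset[of ?Y y f] lin_superset[of ?Y "\<lambda>c. x c - y c" f]
    by (simp add: left_diff_distrib sum_subtractf)
qed

lemma lin_scaled_delta: "lin f (\<lambda>c. \<alpha> * delta a c) = (\<lambda>d. \<alpha> * f a d)"
proof -
  have "supp (\<lambda>c. \<alpha> * delta a c) \<subseteq> {a}" by (auto simp: supp_def delta_def)
  then show ?thesis using lin_superset[of "{a}" _ f] by (simp add: delta_def)
qed

lemma lin_delta: "lin f (delta a) = f a"
  using lin_scaled_delta[of f 1 a] by simp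

lemma finite_supp_scaled_delta: "finite (supp (\<lambda>c. \<alpha> * delta a c))"
  by (rule finite_subset[of _ "{a}"]) (auto simp: supp_def delta_def)

lemma lin_sum_delta:
  assumes "finite K"
  shows "lin f (\<lambda>c. \<Sum>k\<in>K. \<alpha> k * delta (\<phi> k) c) = (\<lambda>d. \<Sum>k\<in>K. \<alpha> k * f (\<phi> k) d)
    \<and> finite (supp (\<lambda>c. \<Sum>k\<in>K. \<alpha> k * delta (\<phi> k) c))"
  using assms
proof (induction K rule: finite_induct)
  case empty
  show ?case by (simp add: lin_def supp_def)
next
  case (insert k K)
  define X where "X = (\<lambda>c. \<Sum>k\<in>K. \<alpha> k * delta (\<phi> k) c)"
  define D where "D = (\<lambda>c. \<alpha> k * delta (\<phi> k) c)"
  have split: "(\<lambda>c. \<Sum>k\<in>insert k K. \<alpha> k * delta (\<phi> k) c) = (\<lambda>c. D c + X c)"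
    unfolding X_def D_def using insert.hyps by simp
  have fin: "finite (supp X)" "finite (supp D)"
    using insert.IH finite_supp_scaled_delta by (simp_all add: X_def D_def)
  have "supp (\<lambda>c. D c + X c) \<subseteq> supp D \<union> supp X" by (auto simp: supp_def)
  then have "finite (supp (\<lambda>c. D c + X c))" using fin by (meson finite_UnI finite_subset)
  moreover have "lin f (\<lambda>c. D c + X c) = (\<lambda>d. \<alpha> k * f (\<phi> k) d + (\<Sum>k\<in>K. \<alpha> k * f (\<phi> k) d))"
    unfolding lin_add[OF fin(2,1)] using insert.IH by (simp add: D_def X_def lin_scaled_delta)
  ultimately show ?case unfolding split using insert.hyps by simp
qed

lemma lin_cong: "(\<And>b. x b \<noteq> 0 \<Longrightarrow> f b = g b) \<Longrightarrow> lin f x = lin g x"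
  by (simp add: lin_def)

lemma lin_lin:
  assumes fx: "finite (supp x)" and fg: "\<And>b. x b \<noteq> 0 \<Longrightarrow> finite (supp (g b))"
  shows "lin f (lin g x) = lin (\<lambda>b. lin f (g b)) x"
proof -
  let ?X = "supp x"
  let ?Y = "\<Union>b\<in>?X. supp (g b)"
  have fY: "finite ?Y" using fx fg by (auto simp: supp_def)
  have lg: "lin g x = (\<lambda>c. \<Sum>b\<in>?X. x b * g b c)" using fx by (intro lin_superset) auto
  have "supp (lin g x) \<subseteq> ?Y"
  proof
    fix c assume "c \<in> supp (lin g x)"
    then have "(\<Sum>b\<in>?X. x b * g b c) \<noteq> 0" using lg by (simp add: supp_def)
    then obtain b where "b \<in> ?X" "x b * g b c \<noteq> 0" by (meson sum.neutral)
    then show "c \<in> ?Y" by (auto simp: supp_def)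
  qed
  then have "lin f (lin g x) = (\<lambda>d. \<Sum>c\<in>?Y. lin g x c * f c d)" by (rule lin_superset[OF fY])
  also have "\<dots> = (\<lambda>d. \<Sum>b\<in>?X. x b * (\<Sum>c\<in>?Y. g b c * f c d))"
    unfolding lg by (rule ext, simp add: sum_distrib_right sum_distrib_left mult.assoc, rule sum.swap)
  also have "\<dots> = (\<lambda>d. \<Sum>b\<in>?X. x b * lin f (g b) d)"
  proof (intro ext sum.cong refl)
    fix d b assume "b \<in> ?X"
    then have "supp (g b) \<subseteq> ?Y" by auto
    then show "x b * (\<Sum>c\<in>?Y. g b c * f c d) = x b * lin f (g b) d" by (simp add: lin_superset[OF fY])
  qed
  also have "\<dots> = lin (\<lambda>b. lin f (g b)) x" using fx by (intro lin_superset[symmetric]) auto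
  finally show ?thesis .
qed

lemma sum_supported_product:
  assumes "finite SX" "finite SY" "supp X \<subseteq> SX" "supp Y \<subseteq> SY" "finite Q"
  shows "(\<Sum>z\<in>Q. X (fst z) * Y (snd z)) = (\<Sum>z\<in>SX \<times> SY. X (fst z) * Y (snd z) * (if z \<in> Q then 1 else 0))"
proof -
  have "(\<Sum>z\<in>Q. X (fst z) * Y (snd z)) = (\<Sum>z\<in>{z \<in> SX \<times> SY. z \<in> Q}. X (fst z) * Y (snd z))"
    using assms by (intro sum.mono_neutral_cong_right) (auto simp: supp_def)
  also have "\<dots> = (\<Sum>z\<in>SX \<times> SY. if z \<in> Q then X (fst z) * Y (snd z) else 0)"
    using assms by (intro sum.inter_filter) auto
  also have "\<dots> = (\<Sum>z\<in>SX \<times> SY. X (fst z) * Y (snd z) * (if z \<in> Q then 1 else 0))"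
    by (intro sum.cong) auto
  finally show ?thesis .
qed

lemma vmult_splits: "vmult a b c = (\<Sum>z\<in>{z. fst z @ snd z = c}. a (fst z) * b (snd z))"
  and finite_splits: "finite {z. fst z @ snd z = (c::'b list)}"
proof -
  have bij: "bij_betw (\<lambda>i. (take i c, drop i c)) {..length c} {z. fst z @ snd z = c}"
    by (rule bij_betw_byWitness[where f'="\<lambda>z. length (fst z)"])
       (auto simp: append_eq_conv_conj prod_eq_iff dest: arg_cong[where f=length])
  show "vmult a b c = (\<Sum>z\<in>{z. fst z @ snd z = c}. a (fst z) * b (snd z))"
    unfolding vmult_def using sum.reindex_bij_betw[OF bij, of "\<lambda>z. a (fst z) * b (snd z)"] by simp
  show "finite {z. fst z @ snd z = c}" using bij_betw_finite[OF bij] by simp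
qed

lemma supp_card_fibres:
  "supp (\<lambda>y. of_nat (card {S \<in> A. P S \<and> \<phi> S = y}) :: complex) \<subseteq> \<phi> ` {S \<in> A. P S}"
proof
  fix y assume "y \<in> supp (\<lambda>y. of_nat (card {S \<in> A. P S \<and> \<phi> S = y}) :: complex)"
  then have "card {S \<in> A. P S \<and> \<phi> S = y} \<noteq> 0" by (simp add: supp_def)
  then obtain S where "S \<in> A" "P S" "\<phi> S = y" by (metis (mono_tags, lifting) card.empty empty_Collect_eq)
  then show "y \<in> \<phi> ` {S \<in> A. P S}" by blast
qed

lemma finite_supp_card:
  assumes "finite A"
  shows "finite (supp (\<lambda>y. of_nat (card {S \<in> A. P S \<and> \<phi> S = y}) :: complex))"
proof (rule finite_subset[OF supp_card_fibres])
  show "finite (\<phi> ` {S \<in> A. P S})" using assms by simp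
qed

lemma lin_card:
  assumes "finite A"
  shows "lin G (\<lambda>y. of_nat (card {S \<in> A. P S \<and> \<phi> S = y})) = (\<lambda>d. \<Sum>S\<in>{S \<in> A. P S}. G (\<phi> S) d)"
proof
  fix d
  let ?A = "{S \<in> A. P S}"
  have "lin G (\<lambda>y. of_nat (card {S \<in> A. P S \<and> \<phi> S = y})) d =
      (\<Sum>y\<in>\<phi> ` ?A. of_nat (card {S \<in> A. P S \<and> \<phi> S = y}) * G y d)"
    using assms supp_card_fibres[of A P \<phi>] by (subst lin_superset[where Y = "\<phi> ` ?A"]) auto
  also have "\<dots> = (\<Sum>y\<in>\<phi> ` ?A. \<Sum>S\<in>{S \<in> ?A. \<phi> S = y}. G (\<phi> S) d)"
    by (rule sum.cong) (auto simp: conj_assoc)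
  also have "\<dots> = (\<Sum>S\<in>?A. G (\<phi> S) d)"
    using assms by (intro sum.image_gen[symmetric]) simp
  finally show "lin G (\<lambda>y. of_nat (card {S \<in> A. P S \<and> \<phi> S = y})) d = (\<Sum>S\<in>?A. G (\<phi> S) d)" .
qed

lemma card_eq_sum_card_fibres:
  assumes "finite D" "finite I" "\<And>x. x \<in> D \<Longrightarrow> f x \<in> I"
  shows "card D = (\<Sum>i\<in>I. card {x \<in> D. f x = i})"
proof -
  have "D = (\<Union>i\<in>I. {x \<in> D. f x = i})" using assms(3) by auto
  moreover have "card (\<Union>i\<in>I. {x \<in> D. f x = i}) = (\<Sum>i\<in>I. card {x \<in> D. f x = i})"
    using assms by (intro card_UN_disjoint) auto
  ultimately show ?thesis by simp
qed

lemma tmult_splits: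
  "tmult X Y (c, d) = (\<Sum>z\<in>{z. fst (fst z) @ fst (snd z) = c \<and> snd (fst z) @ snd (snd z) = d}.
      X (fst z) * Y (snd z))"
  and finite_tsplits:
  "finite {z. fst (fst z) @ fst (snd z) = (c::'b list) \<and> snd (fst z) @ snd (snd z) = (d::'c list)}"
proof -
  let ?Z = "{z. fst (fst z) @ fst (snd z) = c \<and> snd (fst z) @ snd (snd z) = d}"
  have bij: "bij_betw (\<lambda>(i, j). ((take i c, take j d), (drop i c, drop j d))) ({..length c} \<times> {..length d}) ?Z"
  proof (rule bij_betw_byWitness[where f'="\<lambda>z. (length (fst (fst z)), length (snd (fst z)))"])
    show "\<forall>z\<in>?Z. (\<lambda>(i, j). ((take i c, take j d), (drop i c, drop j d)))
        (length (fst (fst z)), length (snd (fst z))) = z"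
      by (auto simp: prod_eq_iff)
  qed auto
  show "finite ?Z" using bij_betw_finite[OF bij] by simp
  have "tmult X Y (c, d) = (\<Sum>ij\<in>{..length c} \<times> {..length d}.
      X (take (fst ij) c, take (snd ij) d) * Y (drop (fst ij) c, drop (snd ij) d))"
    by (simp add: tmult_def sum.cartesian_product case_prod_beta)
  also have "\<dots> = (\<Sum>z\<in>?Z. X (fst z) * Y (snd z))"
    using sum.reindex_bij_betw[OF bij, of "\<lambda>z. X (fst z) * Y (snd z)"] by (simp add: case_prod_beta)
  finally show "tmult X Y (c, d) = (\<Sum>z\<in>?Z. X (fst z) * Y (snd z))" .
qed

lemma vmult_expand:
  assumes "finite A" "finite B" "supp a \<subseteq> A" "supp b \<subseteq> B"
  shows "vmult a b = (\<lambda>c. \<Sum>z\<in>A \<times> B. (a (fst z) * b (snd z)) * delta (fst z @ snd z) c)"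
proof
  fix c
  show "vmult a b c = (\<Sum>z\<in>A \<times> B. (a (fst z) * b (snd z)) * delta (fst z @ snd z) c)"
    unfolding vmult_splits using assms finite_splits
    by (subst sum_supported_product[where SX = A and SY = B]) (auto simp: delta_def intro: sum.cong)
qed

lemma tmult_expand:
  assumes "finite A" "finite B" "supp X \<subseteq> A" "supp Y \<subseteq> B"
  shows "tmult X Y = (\<lambda>cd. \<Sum>z\<in>A \<times> B.
      (X (fst z) * Y (snd z)) * delta (fst (fst z) @ fst (snd z), snd (fst z) @ snd (snd z)) cd)"
proof
  fix cd :: "'a list \<times> 'b list"
  obtain c d where cd: "cd = (c, d)" by (cases cd)
  show "tmult X Y cd = (\<Sum>z\<in>A \<times> B.
      (X (fst z) * Y (snd z)) * delta (fst (fst z) @ fst (snd z), snd (fst z) @ snd (snd z)) cd)"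
    unfolding cd tmult_splits using assms finite_tsplits
    by (subst sum_supported_product[where SX = A and SY = B]) (auto simp: delta_def intro: sum.cong)
qed

lemma finite_supp_vmult: "finite (supp a) \<Longrightarrow> finite (supp b) \<Longrightarrow> finite (supp (vmult a b))"
  using lin_sum_delta[of "supp a \<times> supp b" "\<lambda>_. id" "\<lambda>z. a (fst z) * b (snd z)" "\<lambda>z. fst z @ snd z"]
    vmult_expand[of "supp a" "supp b" a b] by simp

lemma finite_supp_tmult: "finite (supp X) \<Longrightarrow> finite (supp Y) \<Longrightarrow> finite (supp (tmult X Y))"
  using lin_sum_delta[of "supp X \<times> supp Y" "\<lambda>_. id" "\<lambda>z. X (fst z) * Y (snd z)"
      "\<lambda>z. (fst (fst z) @ fst (snd z), snd (fst z) @ snd (snd z))"]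
    tmult_expand[of "supp X" "supp Y" X Y] by simp

lemma tmult_sum_left: "tmult (\<lambda>e. \<Sum>k\<in>K. f k e) g = (\<lambda>d. \<Sum>k\<in>K. tmult (f k) g d)"
proof (induction K rule: infinite_finite_induct)
  case (insert k K)
  have "tmult (\<lambda>e. f1 e + f2 e) g = (\<lambda>d. tmult f1 g d + tmult f2 g d)" for f1 f2
    by (auto simp: tmult_def distrib_right sum.distrib)
  with insert show ?case by simp
qed (auto simp: tmult_def)

lemma tmult_sum_right: "tmult g (\<lambda>e. \<Sum>k\<in>K. f k e) = (\<lambda>d. \<Sum>k\<in>K. tmult g (f k) d)"
proof (induction K rule: infinite_finite_induct)
  case (insert k K)
  have "tmult g (\<lambda>e. f1 e + f2 e) = (\<lambda>d. tmult g f1 d + tmult g f2 d)" for f1 f2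
    by (auto simp: tmult_def distrib_left sum.distrib)
  with insert show ?case by simp
qed (auto simp: tmult_def)

lemma tmult_bilinear: "tmult (\<lambda>e. \<Sum>h1\<in>A. a h1 * F h1 e) (\<lambda>e. \<Sum>h2\<in>B. b h2 * G h2 e)
     = (\<lambda>d. \<Sum>z\<in>A \<times> B. a (fst z) * b (snd z) * tmult (F (fst z)) (G (snd z)) d)"
proof -
  have scal: "tmult (\<lambda>e. \<alpha> * f e) (\<lambda>e. \<beta> * g e) = (\<lambda>d. \<alpha> * \<beta> * tmult f g d)" for \<alpha> \<beta> f g
    by (auto simp: tmult_def sum_distrib_left mult_ac)
  show ?thesis
    by (simp add: tmult_sum_left tmult_sum_right scal sum.cartesian_product case_prod_beta)
qed

lemma lin_vmult:
  assumes fa: "finite (supp a)" and fb: "finite (supp b)"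
    and mult: "\<And>h1 h2. a h1 \<noteq> 0 \<Longrightarrow> b h2 \<noteq> 0 \<Longrightarrow> F (h1 @ h2) = tmult (F h1) (F h2)"
  shows "lin F (vmult a b) = tmult (lin F a) (lin F b)"
proof -
  have "lin F (vmult a b) = (\<lambda>d. \<Sum>z\<in>supp a \<times> supp b. a (fst z) * b (snd z) * F (fst z @ snd z) d)"
    using fa fb lin_sum_delta[of "supp a \<times> supp b" F "\<lambda>z. a (fst z) * b (snd z)" "\<lambda>z. fst z @ snd z"]
    by (simp add: vmult_expand[OF fa fb])
  also have "\<dots> = (\<lambda>d. \<Sum>z\<in>supp a \<times> supp b. a (fst z) * b (snd z) * tmult (F (fst z)) (F (snd z)) d)"
    using mult by (intro ext sum.cong) (auto simp: supp_def)
  also have "\<dots> = tmult (lin F a) (lin F b)"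
    by (simp add: tmult_bilinear lin_superset[OF fa] lin_superset[OF fb])
  finally show ?thesis .
qed

lemma lin_tmult:
  assumes fX: "finite (supp X)" and fY: "finite (supp Y)"
    and mult: "\<And>x y. X x \<noteq> 0 \<Longrightarrow> Y y \<noteq> 0 \<Longrightarrow> G (fst x @ fst y, snd x @ snd y) = tmult (G x) (G y)"
  shows "lin G (tmult X Y) = tmult (lin G X) (lin G Y)"
proof -
  have "lin G (tmult X Y) = (\<lambda>d. \<Sum>z\<in>supp X \<times> supp Y.
      X (fst z) * Y (snd z) * G (fst (fst z) @ fst (snd z), snd (fst z) @ snd (snd z)) d)"
    using fX fY lin_sum_delta[of "supp X \<times> supp Y" G "\<lambda>z. X (fst z) * Y (snd z)"
        "\<lambda>z. (fst (fst z) @ fst (snd z), snd (fst z) @ snd (snd z))"]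
    by (simp add: tmult_expand[OF fX fY])
  also have "\<dots> = (\<lambda>d. \<Sum>z\<in>supp X \<times> supp Y. X (fst z) * Y (snd z) * tmult (G (fst z)) (G (snd z)) d)"
    using mult by (intro ext sum.cong) (auto simp: supp_def)
  also have "\<dots> = tmult (lin G X) (lin G Y)"
    by (simp add: tmult_bilinear lin_superset[OF fX] lin_superset[OF fY])
  finally show ?thesis .
qed

lemma vmult_vone_left: "vmult vone y = y"
proof
  fix q
  have "vmult vone y q = vone (take 0 q) * y (drop 0 q)"
    unfolding vmult_def by (rule sum_eq_single) (auto simp: vone_def)
  then show "vmult vone y q = y q" by (simp add: vone_def)
qed

lemma tmult_tone_right:
  fixes x :: "'a list \<times> 'b list \<Rightarrow> complex"
  shows "tmult x tone = x"
proof
  fix cd :: "'a list \<times> 'b list"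
  obtain c d where cd: "cd = (c, d)" by (cases cd)
  have "tmult x tone (c, d) = (\<Sum>j\<le>length d. x (c, take j d) * tone ([] :: 'a list, drop j d))"
    unfolding tmult_def by (simp only: prod.case, subst sum_eq_single[of _ "length c"]) (auto simp: tone_def)
  also have "\<dots> = x (c, d)"
    by (subst sum_eq_single[of _ "length d"]) (auto simp: tone_def)
  finally show "tmult x tone cd = x cd" by (simp only: cd)
qed

lemma finite_supp_vone: "finite (supp vone)"
  by (rule finite_subset[of _ "{[]}"]) (auto simp: supp_def vone_def)

lemma finite_supp_tone: "finite (supp tone)"
  by (rule finite_subset[of _ "{([], [])}"]) (auto simp: supp_def tone_def split: if_splits)

lemma vone_eq_delta: "vone = delta []"
  by (rule ext) (simp add: vone_def delta_def)

lemma tone_eq_delta: "tone = delta ([], [])"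
  by (rule ext) (auto simp: tone_def delta_def split: if_splits)

section \<open>Interleavings and chunks of lists\<close>

lemma map_conv_nth: "map f ts = map (\<lambda>i. f (ts ! i)) [0..<length ts]"
  by (rule nth_equalityI) auto

lemma length_ilv: "length rs = Suc (length l) \<Longrightarrow> length (ilv rs l) = sum_list (map length rs) + length l"
  by (induction rs l rule: ilv.induct) auto

lemma ilv_Cons: "rs \<noteq> [] \<Longrightarrow> ilv (r # rs) (a # l) = r @ a # ilv rs l"
  by (cases rs) auto

lemma map_ilv: "length rs = Suc (length l) \<Longrightarrow> ilv (map (map f) rs) (map f l) = map f (ilv rs l)"
  by (induction rs l rule: ilv.induct) (auto simp: ilv_Cons)

lemma filter_ilv: "length rs = Suc (length l) \<Longrightarrow> \<forall>x\<in>set l. P x \<Longrightarrow>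
    filter P (ilv rs l) = ilv (map (filter P) rs) l"
  by (induction rs l rule: ilv.induct) (auto simp: ilv_Cons)

lemma ilv_inj:
  "length rs = Suc (length l) \<Longrightarrow> length rs' = Suc (length l') \<Longrightarrow>
   map length rs = map length rs' \<Longrightarrow> ilv rs l = ilv rs' l' \<Longrightarrow> rs = rs' \<and> l = l'"
proof (induction rs l arbitrary: rs' l' rule: ilv.induct)
  case (3 r r2 rs a l)
  then obtain r' r2' rs2' a' l1' where rs': "rs' = r' # r2' # rs2'" and l': "l' = a' # l1'"
    by (cases rs'; cases "tl rs'"; cases l') auto
  with 3 have "r = r'" "a = a'" "ilv (r2 # rs) l = ilv (r2' # rs2') l1'" by auto
  moreover have "length (map length rs) = length (map length rs2')" using 3 rs' by simp
  then have "length l1' = length l" using 3 rs' l' by simp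
  ultimately show ?case using "3.IH"[of "r2' # rs2'" l1'] 3 rs' l' by simp
qed (auto simp: length_Suc_conv)

lemma ilv_surj:
  "ks \<noteq> [] \<Longrightarrow> length u = sum_list ks + length ks - 1 \<Longrightarrow>
   \<exists>rs l. map length rs = ks \<and> length l = length ks - 1 \<and> ilv rs l = u"
proof (induction ks arbitrary: u)
  case (Cons k ks)
  show ?case
  proof (cases "ks = []")
    case True
    then show ?thesis using Cons.prems by (intro exI[where x="[u]"] exI[where x="[]"]) simp
  next
    case False
    have lk: "Suc k \<le> length u" using Cons.prems False by (cases ks) auto
    have "length (drop (Suc k) u) = sum_list ks + length ks - 1" using Cons.prems False lk by (cases ks) auto
    then obtain rs l where rl: "map length rs = ks" "length l = length ks - 1" "ilv rs l = drop (Suc k) u"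
      using Cons.IH False by blast
    moreover have "rs \<noteq> []" using rl False by auto
    ultimately have "ilv (take k u # rs) (u ! k # l) = u"
      using lk by (auto simp: ilv_Cons id_take_nth_drop[symmetric])
    then show ?thesis using rl lk False
      by (intro exI[where x="take k u # rs"] exI[where x="u ! k # l"]) (cases ks; simp)
  qed
qed simp

fun chunks :: "nat list \<Rightarrow> 'b list \<Rightarrow> 'b list list" where
  "chunks [] xs = []"
| "chunks (k # ks) xs = take k xs # chunks ks (drop k xs)"

lemma length_chunks [simp]: "length (chunks ks xs) = length ks"
  by (induction ks arbitrary: xs) auto

lemma concat_chunks: "concat (chunks ks xs) = take (sum_list ks) xs"
  by (induction ks arbitrary: xs) (auto simp: take_add)

lemma length_chunks_nth: "i < length ks \<Longrightarrow> sum_list ks \<le> length xs \<Longrightarrow> length (chunks ks xs ! i) = ks ! i"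
  by (induction ks arbitrary: xs i) (auto simp: nth_Cons split: nat.split)

lemma set_chunks_nth: "i < length ks \<Longrightarrow> set (chunks ks xs ! i) \<subseteq> set xs"
  by (induction ks arbitrary: xs i) (auto simp: nth_Cons split: nat.split dest: in_set_takeD in_set_dropD)

lemma chunks_concat: "chunks (map length yss) (concat yss) = yss"
  by (induction yss) auto

lemma concat_chunks_upt: "sum_list ks = length xs \<Longrightarrow> length ks = n \<Longrightarrow>
   concat (map (\<lambda>i. chunks ks xs ! i) [0..<n]) = xs"
  using map_conv_nth[of id "chunks ks xs"] by (simp add: concat_chunks)

section \<open>Decorated reduced trees\<close>

fun nleaves :: "'a stree \<Rightarrow> nat" where
  "nleaves (SN ts l) = (if ts = [] then 1 else sum_list (map nleaves ts))"

fun is_leaf :: "'a stree \<Rightarrow> bool" where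
  "is_leaf (SN ts l) = (ts = [])"

definition reduced_stree :: "'a stree \<Rightarrow> bool" where
  "reduced_stree s = (swf s \<and> reduced (shape s))"

lemma reduced_stree_SN:
  "reduced_stree (SN ts l) =
    (length l = length ts - 1 \<and> (ts = [] \<or> 2 \<le> length ts) \<and> (\<forall>t\<in>set ts. reduced_stree t))"
  by (auto simp: reduced_stree_def)

lemma leaves_pos: "1 \<le> leaves T"
proof (induction T)
  case (Nd ts)
  then show ?case by (cases ts) (simp_all add: trans_le_add1)
qed

lemma nleaves_pos: "1 \<le> nleaves s"
proof (induction s)
  case (SN ts l)
  then show ?case by (cases ts) (simp_all add: trans_le_add1)
qed

lemma leaves_shape: "leaves (shape s) = nleaves s"
  by (induction s) (simp add: comp_def cong: map_cong)

lemma reading_SN: "reading (SN ts l) = ilv (map (\<lambda>i. reading (ts ! i)) [0..<length ts]) l"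
  by (simp add: map_conv_nth[of reading ts])

lemma sum_list_minus_1:
  "(\<And>x. 1 \<le> f x) \<Longrightarrow> sum_list (map (\<lambda>x. f x - 1) xs) + length xs = sum_list (map f xs)"
proof (induction xs)
  case (Cons a xs)
  have "1 \<le> f a" by (rule Cons.prems)
  with Cons.IH[OF Cons.prems] show ?case by simp
qed simp

lemma length_reading: "swf s \<Longrightarrow> length (reading s) + 1 = nleaves s"
proof (induction s)
  case (SN ts l)
  show ?case
  proof (cases "ts = []")
    case False
    have "length (reading t) = nleaves t - 1" if "t \<in> set ts" for t
      using SN.IH[OF that] SN.prems that by fastforce
    then have "sum_list (map length (map reading ts)) = sum_list (map (\<lambda>t. nleaves t - 1) ts)"
      by (simp cong: map_cong)
    moreover have "1 \<le> length ts" using False by (cases ts) auto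
    ultimately show ?thesis using SN.prems False sum_list_minus_1[of nleaves ts, OF nleaves_pos]
      by (simp add: length_ilv)
  qed simp
qed

lemma length_reading_reduced: "reduced_stree s \<Longrightarrow> length (reading s) + 1 = nleaves s"
  using length_reading reduced_stree_def by blast

lemma reduced_stree_reading_Nil: "reduced_stree s \<Longrightarrow> reading s = [] \<longleftrightarrow> is_leaf s"
proof (cases s)
  case (SN ts l)
  assume red: "reduced_stree s"
  have "2 \<le> nleaves s" if "\<not> is_leaf s"
  proof -
    from red that SN have "2 \<le> length ts" by (simp add: reduced_stree_def)
    then obtain t1 t2 ts' where "ts = t1 # t2 # ts'" by (cases ts; cases "tl ts") auto
    then show ?thesis using SN nleaves_pos[of t1] nleaves_pos[of t2] by simp
  qed
  then show ?thesis using length_reading_reduced[OF red] SN by (cases ts) auto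
qed

lemma reduced_stree_leaf: "reduced_stree s \<Longrightarrow> is_leaf s \<Longrightarrow> s = SN [] []"
  by (cases s) (auto simp: reduced_stree_def)

lemma tob_reduced_stree: "reduced_stree r \<Longrightarrow> reading r \<noteq> [] \<Longrightarrow> tob r = [dec r]"
  using reduced_stree_reading_Nil by (cases r) (fastforce simp: tob_def)

text \<open>A tree of \<open>swf\<close> shape is determined by its shape and its reading: the shapes of the
  subtrees fix the lengths of their readings, hence how the reading splits.\<close>

lemma swf_eqI: "swf s \<Longrightarrow> swf s' \<Longrightarrow> shape s = shape s' \<Longrightarrow> reading s = reading s' \<Longrightarrow> s = s'"
proof (induction s arbitrary: s')
  case (SN ts l)
  obtain ts' l' where s': "s' = SN ts' l'" by (cases s')
  have sh: "map shape ts = map shape ts'" using SN.prems s' by simp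
  then have len: "length ts' = length ts" by (metis length_map)
  have lengths: "map length (map reading xs) = map (\<lambda>T. leaves T - 1) (map shape xs)"
    if "\<forall>t\<in>set xs. swf t" for xs :: "'a stree list"
    using that by (auto simp: leaves_shape length_reading[symmetric] intro!: map_cong)
  show ?case
  proof (cases "ts = []")
    case True
    then show ?thesis using SN.prems s' len by simp
  next
    case False
    have "map reading ts = map reading ts' \<and> l = l'"
      using SN.prems s' False len lengths[of ts] lengths[of ts'] sh by (intro ilv_inj) auto
    moreover have "ts ! i = ts' ! i" if i: "i < length ts" and rd: "map reading ts = map reading ts'" for i
    proof (rule SN.IH)
      show "ts ! i \<in> set ts" "swf (ts ! i)" "swf (ts' ! i)" using SN.prems s' i len by auto
      show "shape (ts ! i) = shape (ts' ! i)" "reading (ts ! i) = reading (ts' ! i)"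
        using sh rd i len by (metis nth_map)+
    qed
    ultimately show ?thesis using s' len by (auto intro: nth_equalityI)
  qed
qed

lemma reduced_stree_dec_inj: "reduced_stree r \<Longrightarrow> reduced_stree r' \<Longrightarrow> dec r = dec r' \<Longrightarrow> r = r'"
  unfolding reduced_stree_def dec_def using swf_eqI by blast

lemma exists_list_nth:
  assumes "\<And>i. i < n \<Longrightarrow> \<exists>x. P i x"
  shows "\<exists>xs. length xs = n \<and> (\<forall>i<n. P i (xs ! i))"
proof (intro exI conjI allI impI)
  show "length (map (\<lambda>i. SOME x. P i x) [0..<n]) = n" by simp
  fix i assume "i < n"
  then show "P i (map (\<lambda>i. SOME x. P i x) [0..<n] ! i)" using someI_ex[OF assms] by simp
qed

lemma decoration_exists: "reduced T \<Longrightarrow> leaves T = length u + 1 \<Longrightarrow> \<exists>s. swf s \<and> shape s = T \<and> reading s = u"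
proof (induction T arbitrary: u)
  case (Nd ts)
  show ?case
  proof (cases "ts = []")
    case True
    then show ?thesis using Nd.prems by (intro exI[of _ "SN [] []"]) simp
  next
    case False
    define ks where "ks = map (\<lambda>t. leaves t - 1) ts"
    have "length u = sum_list ks + length ks - 1"
      using Nd.prems False sum_list_minus_1[of leaves ts, OF leaves_pos] by (simp add: ks_def)
    then obtain rs l where rl: "map length rs = ks" "length l = length ks - 1" "ilv rs l = u"
      using ilv_surj[of ks u] False by (auto simp: ks_def)
    have "\<exists>s. swf s \<and> shape s = ts ! i \<and> reading s = rs ! i" if i: "i < length ts" for i
    proof (rule Nd.IH)
      show "ts ! i \<in> set ts" "reduced (ts ! i)" using Nd.prems i by auto
      have "length (rs ! i) = leaves (ts ! i) - 1" using rl(1) i by (metis ks_def length_map nth_map)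
      then show "leaves (ts ! i) = length (rs ! i) + 1" using leaves_pos[of "ts ! i"] by simp
    qed
    then obtain ss where ss: "length ss = length ts"
      "\<forall>i<length ts. swf (ss ! i) \<and> shape (ss ! i) = ts ! i \<and> reading (ss ! i) = rs ! i"
      using exists_list_nth[of "length ts" "\<lambda>i s. swf s \<and> shape s = ts ! i \<and> reading s = rs ! i"]
      by blast
    have lrs: "length rs = length ts" using rl(1) by (metis ks_def length_map)
    have "map shape ss = ts" "map reading ss = rs" using ss lrs by (auto intro: nth_equalityI)
    moreover have "\<forall>t\<in>set ss. swf t" using ss by (auto simp: in_set_conv_nth)
    ultimately show ?thesis using rl ss by (intro exI[of _ "SN ss l"]) (simp add: ks_def)
  qed
qed

lemma length_le_sum_list: "(\<And>x. 1 \<le> f x) \<Longrightarrow> length xs \<le> sum_list (map f xs)"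
proof (induction xs)
  case (Cons a xs)
  show ?case using Cons.IH[OF Cons.prems] Cons.prems[of a] by simp
qed simp

lemma leaves_child_less: "reduced (Nd ts) \<Longrightarrow> t \<in> set ts \<Longrightarrow> leaves t < leaves (Nd ts)"
proof -
  assume red: "reduced (Nd ts)" and t: "t \<in> set ts"
  have "length (remove1 t ts) \<le> sum_list (map leaves (remove1 t ts))"
    using leaves_pos by (rule length_le_sum_list)
  then show ?thesis
    using red t sum_list_map_remove1[OF t, of leaves] by (auto simp: length_remove1)
qed

lemma finite_reduced_leaves_le: "finite {T. reduced T \<and> leaves T \<le> k}"
proof (induction k)
  case 0
  have "{T. reduced T \<and> leaves T \<le> 0} = {}" using leaves_pos not_one_le_zero le_trans by blast
  then show ?case by (metis finite.emptyI)
next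
  case (Suc k)
  let ?R = "{T. reduced T \<and> leaves T \<le> k}"
  have "{T. reduced T \<and> leaves T \<le> Suc k} \<subseteq> Nd ` {ts. set ts \<subseteq> ?R \<and> length ts \<le> Suc k}"
  proof
    fix T assume T: "T \<in> {T. reduced T \<and> leaves T \<le> Suc k}"
    obtain ts where Tts: "T = Nd ts" by (cases T)
    have "length ts \<le> Suc k" using T Tts length_le_sum_list[of leaves ts, OF leaves_pos]
      by (cases "ts = []") auto
    moreover have "set ts \<subseteq> ?R" using T Tts leaves_child_less[of ts] by fastforce
    ultimately show "T \<in> Nd ` {ts. set ts \<subseteq> ?R \<and> length ts \<le> Suc k}" using Tts by blast
  qed
  moreover have "finite {ts. set ts \<subseteq> ?R \<and> length ts \<le> Suc k}"
    using Suc by (rule finite_lists_length_le)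
  ultimately show ?case by (meson finite_imageI finite_subset)
qed

definition reduced_trees :: "nat \<Rightarrow> ptree set" where
  "reduced_trees k = {T. reduced T \<and> leaves T = k}"

lemma finite_reduced_trees: "finite (reduced_trees k)"
  by (rule finite_subset[OF _ finite_reduced_leaves_le[of k]]) (auto simp: reduced_trees_def)

section \<open>Admissible cuts\<close>

definition child_cut :: "nat list set \<Rightarrow> nat \<Rightarrow> nat list set" where
  "child_cut c i = {p. i # p \<in> c}"

lemma UN_child_cut: "\<forall>p\<in>c. \<exists>i q. p = i # q \<and> i < n \<Longrightarrow> (\<Union>i<n. Cons i ` child_cut c i) = c"
  by (auto simp: child_cut_def image_iff)

lemma child_cut_UN: "i < n \<Longrightarrow> child_cut (\<Union>j<n. Cons j ` A j) i = A i"
  by (auto simp: child_cut_def)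

lemma map_zip_upt: "map (\<lambda>(i, t). f i t) (zip [0..<length ts] ts) = map (\<lambda>i. f i (ts ! i)) [0..<length ts]"
  by (rule nth_equalityI) auto

lemma cutR_SN:
  "cutR c (SN ts l) =
    (if [] \<in> c then SN [] [] else SN (map (\<lambda>i. cutR (child_cut c i) (ts ! i)) [0..<length ts]) l)"
  by (subst cutR.simps) (simp only: map_zip_upt child_cut_def)

lemma cutP_SN:
  "cutP c (SN ts l) =
    (if [] \<in> c then [SN ts l] else concat (map (\<lambda>i. cutP (child_cut c i) (ts ! i)) [0..<length ts]))"
  by (subst cutP.simps) (simp only: map_zip_upt child_cut_def)

declare cutR.simps [simp del] cutP.simps [simp del]

lemma internalv_SN:
  "p \<in> internalv (SN ts l) \<longleftrightarrow>
    (p = [] \<and> ts \<noteq> []) \<or> (\<exists>i q. p = i # q \<and> i < length ts \<and> q \<in> internalv (ts ! i))"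
  by (cases p) (auto simp: internalv_def)

lemma leafv_SN:
  "p \<in> leafv (SN ts l) \<longleftrightarrow>
    (p = [] \<and> ts = []) \<or> (\<exists>i q. p = i # q \<and> i < length ts \<and> q \<in> leafv (ts ! i))"
  by (cases p) (auto simp: leafv_def)

lemma leafv_nonempty: "\<exists>q. q \<in> leafv s"
proof (induction s)
  case (SN ts l)
  show ?case
  proof (cases ts)
    case Nil then show ?thesis by (auto simp: leafv_SN)
  next
    case (Cons t ts')
    then obtain q where "q \<in> leafv t" using SN by auto
    then have "0 # q \<in> leafv (SN ts l)" using Cons by (auto simp: leafv_SN)
    then show ?thesis by blast
  qed
qed

lemma internalv_leaf_below: "p \<in> internalv s \<Longrightarrow> \<exists>q\<in>leafv s. prefix p q"
proof (induction s arbitrary: p)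
  case (SN ts l)
  show ?case
  proof (cases p)
    case Nil
    obtain q where "q \<in> leafv (SN ts l)" using leafv_nonempty by blast
    then show ?thesis using Nil by auto
  next
    case (Cons i p')
    with SN.prems have i: "i < length ts" "p' \<in> internalv (ts ! i)" by (auto simp: internalv_SN)
    then obtain q where "q \<in> leafv (ts ! i)" "prefix p' q" using SN.IH[of "ts ! i" p'] by auto
    then have "i # q \<in> leafv (SN ts l)" "prefix p (i # q)" using i Cons by (auto simp: leafv_SN)
    then show ?thesis by blast
  qed
qed

lemma rightmost_leaf_exists: "\<exists>q\<in>leafv s. on_right s q"
proof (induction s)
  case (SN ts l)
  show ?case
  proof (cases "ts = []")
    case True then show ?thesis by (auto simp: leafv_SN)
  next
    case False
    then have "ts ! (length ts - 1) \<in> set ts" by simp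
    then obtain q where "q \<in> leafv (ts ! (length ts - 1))" "on_right (ts ! (length ts - 1)) q"
      using SN by blast
    then have "(length ts - 1) # q \<in> leafv (SN ts l)" "on_right (SN ts l) ((length ts - 1) # q)"
      using False by (auto simp: leafv_SN)
    then show ?thesis by blast
  qed
qed

lemma card_prefix_Cons:
  "card {p \<in> c. prefix p (i # q)} = (if [] \<in> c then 1 else 0) + card {p \<in> child_cut c i. prefix p q}"
proof -
  have split: "{p \<in> c. prefix p (i # q)} = (if [] \<in> c then {[]} else {}) \<union> Cons i ` {p \<in> child_cut c i. prefix p q}"
    by (auto simp: child_cut_def prefix_Cons)
  have "finite {p \<in> child_cut c i. prefix p q}"
    by (rule finite_subset[of _ "set (prefixes q)"]) auto
  moreover have "card (Cons i ` {p \<in> child_cut c i. prefix p q}) = card {p \<in> child_cut c i. prefix p q}"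
    by (rule card_image) (auto simp: inj_on_def)
  ultimately show ?thesis by (simp add: split image_iff)
qed

lemma adm_root: "adm (SN ts l) c \<Longrightarrow> [] \<in> c \<Longrightarrow> c = {[]} \<and> ts \<noteq> []"
proof
  assume adm: "adm (SN ts l) c" and root: "[] \<in> c"
  then show "ts \<noteq> []" by (auto simp: adm_def internalv_SN)
  show "c = {[]}"
  proof (rule ccontr)
    assume "c \<noteq> {[]}"
    with root obtain p where p: "p \<in> c" "p \<noteq> []" by blast
    then have "p \<in> internalv (SN ts l)" using adm by (auto simp: adm_def)
    then obtain q where q: "q \<in> leafv (SN ts l)" "prefix p q" using internalv_leaf_below by blast
    have "finite {p' \<in> c. prefix p' q}" by (rule finite_subset[of _ "set (prefixes q)"]) auto
    moreover have "{[], p} \<subseteq> {p' \<in> c. prefix p' q}" using p q root by auto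
    ultimately have "2 \<le> card {p' \<in> c. prefix p' q}" using p card_mono[of _ "{[], p}"] by fastforce
    then show False using adm q by (auto simp: adm_def)
  qed
qed

lemma adm_SN:
  "adm (SN ts l) c \<longleftrightarrow> (c = {[]} \<and> ts \<noteq> []) \<or>
    ([] \<notin> c \<and> (\<forall>p\<in>c. \<exists>i q. p = i # q \<and> i < length ts) \<and> (\<forall>i<length ts. adm (ts ! i) (child_cut c i)))"
  (is "?L \<longleftrightarrow> ?A \<or> ?B")
proof
  assume L: ?L
  show "?A \<or> ?B"
  proof (cases "[] \<in> c")
    case False
    have "\<exists>i q. p = i # q \<and> i < length ts" if "p \<in> c" for p
    proof -
      have "p \<in> internalv (SN ts l)" "p \<noteq> []" using L False that by (auto simp: adm_def)
      then show ?thesis by (cases p) (simp_all only: internalv_SN list.simps, blast)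
    qed
    moreover have "adm (ts ! i) (child_cut c i)" if i: "i < length ts" for i
    proof -
      have "card {p \<in> child_cut c i. prefix p q} \<le> 1" if "q \<in> leafv (ts ! i)" for q
      proof -
        have "i # q \<in> leafv (SN ts l)" using i that by (auto simp: leafv_SN)
        then show ?thesis using L False card_prefix_Cons[of c i q] by (auto simp: adm_def)
      qed
      then show ?thesis using L i by (auto simp: adm_def child_cut_def internalv_SN)
    qed
    ultimately show ?thesis using False by blast
  qed (use L adm_root in blast)
next
  assume "?A \<or> ?B"
  then show ?L
  proof
    assume A: ?A
    have "card {p \<in> c. prefix p q} \<le> card {[] :: nat list}" for q
      using A by (intro card_mono) auto
    then show ?L using A by (auto simp: adm_def internalv_SN)
  next
    assume B: ?B
    have "c \<subseteq> internalv (SN ts l)"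
      using B by (fastforce simp: adm_def child_cut_def internalv_SN)
    moreover have "card {p \<in> c. prefix p q} \<le> 1" if q: "q \<in> leafv (SN ts l)" for q
      using q B card_prefix_Cons[of c] by (cases q) (auto simp: leafv_SN adm_def)
    ultimately show ?L by (simp add: adm_def)
  qed
qed

lemma adm_empty: "adm s {}"
  by (simp add: adm_def)

definition avoids_right :: "'a stree \<Rightarrow> nat list set \<Rightarrow> bool" where
  "avoids_right s c = (\<forall>p\<in>c. \<forall>q\<in>leafv s. on_right s q \<longrightarrow> \<not> prefix p q)"

section \<open>Marked words\<close>

text \<open>A marked word records, for each letter of a word, whether it is kept in \<open>R^S\<close>
  (marked \<open>True\<close>) or falls into one of the cut-off blocks of \<open>P^S\<close>.  Its \<open>gaps\<close> are
  the maximal runs of unmarked letters, empty runs included.\<close>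

definition marked :: "('a \<times> bool) list \<Rightarrow> 'a list" where
  "marked m = map fst (filter snd m)"

fun gaps :: "('a \<times> bool) list \<Rightarrow> 'a list list" where
  "gaps [] = [[]]"
| "gaps ((a, b) # m) = (if b then [] # gaps m else (a # hd (gaps m)) # tl (gaps m))"

lemma gaps_nonempty[simp]: "gaps m \<noteq> []"
  by (induction m rule: gaps.induct) auto

lemma gaps_append_marked: "gaps (x @ (a, True) # y) = gaps x @ gaps y"
proof (induction x rule: gaps.induct)
  case 1 then show ?case by simp
next
  case (2 b c m)
  show ?case
  proof (cases c)
    case True with 2 show ?thesis by simp
  next
    case False
    have "gaps (m @ (a, True) # y) = gaps m @ gaps y" using 2 False by simp
    moreover obtain g gs where "gaps m = g # gs" using gaps_nonempty by (cases "gaps m") auto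
    ultimately show ?thesis using False by simp
  qed
qed

lemma gaps_unmarked[simp]: "gaps (map (\<lambda>a. (a, False)) u) = [u]"
  by (induction u) auto

lemma length_gaps: "length (gaps m) = Suc (length (marked m))"
proof (induction m rule: gaps.induct)
  case 1 then show ?case by (simp add: marked_def)
next
  case (2 a b m)
  obtain g gs where "gaps m = g # gs" using gaps_nonempty by (cases "gaps m") auto
  with 2 show ?case by (auto simp: marked_def)
qed

lemma gaps_ilv: "length ms = Suc (length l) \<Longrightarrow> gaps (ilv ms (map (\<lambda>a. (a, True)) l)) = concat (map gaps ms)"
proof (induction l arbitrary: ms)
  case Nil then show ?case by (cases ms) auto
next
  case (Cons a l)
  then have "length ms = Suc (Suc (length l))" by simp
  then obtain m m2 ms2 where ms: "ms = m # m2 # ms2" by (cases ms; cases "tl ms") auto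
  have "gaps (ilv ms (map (\<lambda>a. (a, True)) (a # l))) = gaps m @ gaps (ilv (m2 # ms2) (map (\<lambda>a. (a, True)) l))"
    using ms by (simp add: gaps_append_marked)
  also have "\<dots> = gaps m @ concat (map gaps (m2 # ms2))" using Cons ms by simp
  finally show ?case using ms by simp
qed

lemma marked_ilv: "length ms = Suc (length l) \<Longrightarrow> marked (ilv ms (map (\<lambda>a. (a, True)) l)) = ilv (map marked ms) l"
proof -
  assume len: "length ms = Suc (length l)"
  have "filter snd (ilv ms (map (\<lambda>a. (a, True)) l)) = ilv (map (filter snd) ms) (map (\<lambda>a. (a, True)) l)"
    using len by (intro filter_ilv) auto
  moreover have "map fst (ilv (map (filter snd) ms) (map (\<lambda>a. (a, True)) l)) =
      ilv (map (map fst) (map (filter snd) ms)) (map fst (map (\<lambda>a. (a, True)) l))"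
    using len by (intro map_ilv[symmetric]) simp
  moreover have "map fst (map (\<lambda>a. (a, True)) l) = l" by (induction l) auto
  moreover have e: "map marked ms = map (map fst \<circ> filter snd) ms" by (simp add: marked_def)
  ultimately show ?thesis unfolding e by (simp add: marked_def)
qed

lemma map_fst_ilv: "length ms = Suc (length l) \<Longrightarrow> map fst (ilv ms (map (\<lambda>a. (a, True)) l)) = ilv (map (map fst) ms) l"
proof -
  assume len: "length ms = Suc (length l)"
  have "map fst (ilv ms (map (\<lambda>a. (a, True)) l)) = ilv (map (map fst) ms) (map fst (map (\<lambda>a. (a, True)) l))"
    using len by (intro map_ilv[symmetric]) simp
  moreover have "map fst (map (\<lambda>a. (a, True)) l) = l" by (induction l) auto
  ultimately show ?thesis by simp
qed

fun mark_word :: "nat set \<Rightarrow> nat \<Rightarrow> 'a list \<Rightarrow> ('a \<times> bool) list" where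
  "mark_word S i [] = []"
| "mark_word S i (a # w) = (a, i \<in> S) # mark_word S (Suc i) w"

lemma map_fst_mark_word[simp]: "map fst (mark_word S i w) = w"
  by (induction w arbitrary: i) auto

lemma length_mark_word[simp]: "length (mark_word S i w) = length w"
  by (induction w arbitrary: i) auto

lemma nth_mark_word: "j < length w \<Longrightarrow> mark_word S i w ! j = (w ! j, i + j \<in> S)"
proof (induction w arbitrary: i j)
  case (Cons a w)
  then show ?case by (cases j) auto
qed simp

lemma mark_word_of: "map fst m = w \<Longrightarrow> m = mark_word {j. j < length w \<and> snd (m ! j)} 0 w"
  by (rule nth_equalityI) (auto simp: nth_mark_word prod_eq_iff)

lemma mark_word_set: "S \<subseteq> {..<length w} \<Longrightarrow> {j. j < length w \<and> snd (mark_word S 0 w ! j)} = S"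
  by (auto simp: nth_mark_word)

lemma cutw_conv_gaps: "cutw S i w = gaps (mark_word S i w)"
proof (induction w arbitrary: i)
  case Nil then show ?case by simp
next
  case (Cons a w)
  obtain g gs where "gaps (mark_word S (Suc i) w) = g # gs" using gaps_nonempty by (cases "gaps (mark_word S (Suc i) w)") auto
  then show ?case using Cons by simp
qed

lemma marked_mark_word_from: "marked (mark_word S i w) = nths w {j. i + j \<in> S}"
proof (induction w arbitrary: i)
  case Nil then show ?case by (simp add: marked_def)
next
  case (Cons a w)
  have "marked (mark_word S i (a # w)) = (if i \<in> S then [a] else []) @ marked (mark_word S (Suc i) w)"
    by (simp add: marked_def)
  also have "\<dots> = (if i \<in> S then [a] else []) @ nths w {j. Suc i + j \<in> S}" using Cons by simp
  also have "\<dots> = nths (a # w) {j. i + j \<in> S}" by (simp add: nths_Cons)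
  finally show ?case .
qed

lemma marked_mark_word: "marked (mark_word S 0 w) = nths w S"
  using marked_mark_word_from[of S 0 w] by simp

lemma Pw_conv_gaps: "Pw S w = filter (\<lambda>u. u \<noteq> []) (gaps (mark_word S 0 w))"
  by (simp add: Pw_def cutw_conv_gaps)

lemma Rw_conv_marked: "Rw S w = (if marked (mark_word S 0 w) = [] then [] else [marked (mark_word S 0 w)])"
  by (simp add: Rw_def marked_mark_word)

lemma last_mark_word: "w \<noteq> [] \<Longrightarrow> snd (last (mark_word S 0 w)) = (length w - 1 \<in> S)"
proof -
  assume "w \<noteq> []"
  then have "mark_word S 0 w \<noteq> []" by (metis length_mark_word length_0_conv)
  then have "last (mark_word S 0 w) = mark_word S 0 w ! (length w - 1)"
    by (simp add: last_conv_nth)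
  then show ?thesis using \<open>w \<noteq> []\<close> by (simp add: nth_mark_word)
qed

lemma last_gaps_unmarked: "last (gaps (x @ [(a, False)])) \<noteq> []"
proof (induction x rule: gaps.induct)
  case 1 then show ?case by simp
next
  case (2 c b m)
  obtain g gs where G: "gaps (m @ [(a, False)]) = g # gs" using gaps_nonempty by (cases "gaps (m @ [(a, False)])") auto
  show ?case
  proof (cases b)
    case True then show ?thesis using 2 by simp
  next
    case False
    then show ?thesis using 2 G by (cases gs) auto
  qed
qed

lemma last_gaps_Nil_iff: "m \<noteq> [] \<Longrightarrow> (last (gaps m) = []) = snd (last m)"
proof -
  assume "m \<noteq> []"
  then obtain x a b where m: "m = x @ [(a, b)]" by (metis append_butlast_last_id prod.collapse)
  show ?thesis
  proof (cases b)
    case True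
    have "gaps (x @ (a, True) # []) = gaps x @ gaps []" by (rule gaps_append_marked)
    then show ?thesis using m True by simp
  next
    case False
    then show ?thesis using m last_gaps_unmarked by simp
  qed
qed

fun merge_gaps :: "'a list \<Rightarrow> 'a list list \<Rightarrow> ('a \<times> bool) list" where
  "merge_gaps [] gs = map (\<lambda>x. (x, False)) (hd gs)"
| "merge_gaps (a # rs) gs = map (\<lambda>x. (x, False)) (hd gs) @ (a, True) # merge_gaps rs (tl gs)"

lemma merge_gaps_Cons: "merge_gaps rs ((a # g) # gs) = (a, False) # merge_gaps rs (g # gs)"
  by (cases rs) auto

lemma merge_gaps_marked_gaps: "merge_gaps (marked m) (gaps m) = m"
proof (induction m rule: gaps.induct)
  case 1 then show ?case by (simp add: marked_def)
next
  case (2 a b m)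
  obtain g gs where G: "gaps m = g # gs" using gaps_nonempty by (cases "gaps m") auto
  show ?case
  proof (cases b)
    case True
    then have "marked ((a, b) # m) = a # marked m" by (simp add: marked_def)
    then show ?thesis using True 2 by simp
  next
    case False
    then have "marked ((a, b) # m) = marked m" by (simp add: marked_def)
    then show ?thesis using False 2 G by (simp add: merge_gaps_Cons)
  qed
qed

lemma marked_gaps_inj: "marked m1 = marked m2 \<Longrightarrow> gaps m1 = gaps m2 \<Longrightarrow> m1 = m2"
  by (metis merge_gaps_marked_gaps)



section \<open>Cutting off and grafting back\<close>

lemma size_nth_less: "i < length ts \<Longrightarrow> size (ts ! i) < Suc (size_list size ts + k)"
proof -
  assume "i < length ts"
  then have "size (ts ! i) \<le> size_list size ts" by (meson nth_mem size_list_estimation' order_refl)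
  then show ?thesis by simp
qed

text \<open>For an admissible cut \<open>c\<close> of \<open>s\<close>, \<open>cut_forest c s\<close> lists, leaf by leaf, what hangs
  below the leaves of \<open>R^c\<close>: the cut-off subtree, or a bare leaf.  Grafting these trees back onto
  the leaves of \<open>R^c\<close> recovers \<open>s\<close>; \<open>graft_cut\<close> recovers \<open>c\<close>, and \<open>graft_marks\<close> reads the
  glued tree, marking the letters seen by the vertices of \<open>R^c\<close>.\<close>

function graft :: "'a stree \<Rightarrow> 'a stree list \<Rightarrow> 'a stree" where
  "graft (SN ts l) gs = (if ts = [] then hd gs
     else SN (map (\<lambda>i. graft (ts ! i) (chunks (map nleaves ts) gs ! i)) [0..<length ts]) l)"
  by pat_completeness auto
termination
  by (relation "measure (\<lambda>(s, gs). size s)") (auto simp: size_nth_less)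

function graft_cut :: "'a stree \<Rightarrow> 'a stree list \<Rightarrow> nat list set" where
  "graft_cut (SN ts l) gs = (if ts = [] then (if is_leaf (hd gs) then {} else {[]})
     else (\<Union>i<length ts. Cons i ` graft_cut (ts ! i) (chunks (map nleaves ts) gs ! i)))"
  by pat_completeness auto
termination
  by (relation "measure (\<lambda>(s, gs). size s)") (auto simp: size_nth_less)

function graft_marks :: "'a stree \<Rightarrow> 'a stree list \<Rightarrow> ('a \<times> bool) list" where
  "graft_marks (SN ts l) gs = (if ts = [] then map (\<lambda>a. (a, False)) (reading (hd gs))
     else ilv (map (\<lambda>i. graft_marks (ts ! i) (chunks (map nleaves ts) gs ! i)) [0..<length ts]) (map (\<lambda>a. (a, True)) l))"
  by pat_completeness auto
termination
  by (relation "measure (\<lambda>(s, gs). size s)") (auto simp: size_nth_less)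

function cut_forest :: "nat list set \<Rightarrow> 'a stree \<Rightarrow> 'a stree list" where
  "cut_forest c (SN ts l) = (if [] \<in> c then [SN ts l] else if ts = [] then [SN [] l]
     else concat (map (\<lambda>i. cut_forest (child_cut c i) (ts ! i)) [0..<length ts]))"
  by pat_completeness auto
termination
  by (relation "measure (\<lambda>(c, s). size s)") (auto simp: size_nth_less)

declare graft.simps[simp del] graft_cut.simps[simp del] graft_marks.simps[simp del] cut_forest.simps[simp del]

lemma map_upt_cong: "(\<And>i. i < n \<Longrightarrow> f i = g i) \<Longrightarrow> map f [0..<n] = map g [0..<n]"
  by simp

lemma length_cut_forest: "length (cut_forest c s) = nleaves (cutR c s)"
proof (induction s arbitrary: c)
  case (SN ts l)
  show ?case
  proof (cases "[] \<in> c")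
    case True then show ?thesis by (simp add: cut_forest.simps cutR_SN)
  next
    case False
    show ?thesis
    proof (cases "ts = []")
      case True with False show ?thesis by (simp add: cut_forest.simps cutR_SN)
    next
      case ne: False
      have IH: "\<And>i. i < length ts \<Longrightarrow> length (cut_forest (child_cut c i) (ts!i)) = nleaves (cutR (child_cut c i) (ts!i))"
        using SN.IH nth_mem by blast
      have "length (cut_forest c (SN ts l)) = sum_list (map (\<lambda>i. length (cut_forest (child_cut c i) (ts!i))) [0..<length ts])"
        using False ne by (simp add: cut_forest.simps length_concat comp_def)
      also have "\<dots> = sum_list (map (\<lambda>i. nleaves (cutR (child_cut c i) (ts!i))) [0..<length ts])"
        using IH by (simp cong: map_upt_cong)
      also have "\<dots> = nleaves (cutR c (SN ts l))"
        using False ne by (simp add: cutR_SN comp_def)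
      finally show ?thesis .
    qed
  qed
qed

lemma reduced_stree_cut: "reduced_stree s \<Longrightarrow> reduced_stree (cutR c s) \<and> (\<forall>g\<in>set (cut_forest c s). reduced_stree g)"
proof (induction s arbitrary: c)
  case (SN ts l)
  show ?case
  proof (cases "[] \<in> c")
    case True then show ?thesis using SN.prems by (simp add: cut_forest.simps cutR_SN reduced_stree_SN)
  next
    case False
    show ?thesis
    proof (cases "ts = []")
      case True with False SN.prems show ?thesis by (simp add: cut_forest.simps cutR_SN)
    next
      case ne: False
      have IH: "\<And>i. i < length ts \<Longrightarrow> reduced_stree (cutR (child_cut c i) (ts!i)) \<and> (\<forall>g\<in>set (cut_forest (child_cut c i) (ts!i)). reduced_stree g)"
        using SN.IH SN.prems nth_mem by (metis reduced_stree_SN)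
      have "reduced_stree (cutR c (SN ts l))"
        using False ne SN.prems IH by (auto simp: cutR_SN reduced_stree_SN)
      moreover have "\<forall>g\<in>set (cut_forest c (SN ts l)). reduced_stree g"
        using False ne IH by (auto simp: cut_forest.simps)
      ultimately show ?thesis by blast
    qed
  qed
qed

lemma chunks_cut_forest:
  assumes "ts \<noteq> []"
  shows "chunks (map (nleaves \<circ> (\<lambda>i. cutR (child_cut c i) (ts!i))) [0..<length ts])
            (concat (map (\<lambda>i. cut_forest (child_cut c i) (ts!i)) [0..<length ts]))
         = map (\<lambda>i. cut_forest (child_cut c i) (ts!i)) [0..<length ts]"
proof -
  have "map (nleaves \<circ> (\<lambda>i. cutR (child_cut c i) (ts!i))) [0..<length ts]
        = map length (map (\<lambda>i. cut_forest (child_cut c i) (ts!i)) [0..<length ts])"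
    by (simp add: length_cut_forest)
  then show ?thesis by (simp only: chunks_concat)
qed

lemma graft_cut_forest: "graft (cutR c s) (cut_forest c s) = s"
proof (induction s arbitrary: c)
  case (SN ts l)
  show ?case
  proof (cases "[] \<in> c")
    case True then show ?thesis by (simp add: cut_forest.simps cutR_SN graft.simps)
  next
    case False
    show ?thesis
    proof (cases "ts = []")
      case True with False show ?thesis by (simp add: cut_forest.simps cutR_SN graft.simps)
    next
      case ne: False
      have IH: "\<And>i. i < length ts \<Longrightarrow> graft (cutR (child_cut c i) (ts!i)) (cut_forest (child_cut c i) (ts!i)) = ts ! i"
        using SN.IH nth_mem by blast
      have "graft (cutR c (SN ts l)) (cut_forest c (SN ts l)) =
          SN (map (\<lambda>i. graft (cutR (child_cut c i) (ts!i)) (cut_forest (child_cut c i) (ts!i))) [0..<length ts]) l"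
        using False ne by (simp add: cut_forest.simps cutR_SN graft.simps chunks_cut_forest)
      also have "\<dots> = SN ts l" using IH by (simp add: map_nth cong: map_upt_cong)
      finally show ?thesis .
    qed
  qed
qed

lemma graft_cut_cut_forest: "adm s c \<Longrightarrow> graft_cut (cutR c s) (cut_forest c s) = c"
proof (induction s arbitrary: c)
  case (SN ts l)
  show ?case
  proof (cases "[] \<in> c")
    case True
    then have "c = {[]}" "ts \<noteq> []" using SN.prems by (auto simp: adm_SN)
    then show ?thesis by (simp add: cut_forest.simps cutR_SN graft_cut.simps)
  next
    case False
    then have B: "\<forall>p\<in>c. \<exists>i q. p = i # q \<and> i < length ts" "\<And>i. i < length ts \<Longrightarrow> adm (ts ! i) (child_cut c i)"
      using SN.prems by (auto simp: adm_SN)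
    show ?thesis
    proof (cases "ts = []")
      case True
      then have "c = {}" using B by auto
      with True show ?thesis by (simp add: cut_forest.simps cutR_SN graft_cut.simps)
    next
      case ne: False
      have IH: "\<And>i. i < length ts \<Longrightarrow> graft_cut (cutR (child_cut c i) (ts!i)) (cut_forest (child_cut c i) (ts!i)) = child_cut c i"
        using SN.IH B nth_mem by blast
      have "graft_cut (cutR c (SN ts l)) (cut_forest c (SN ts l)) =
          (\<Union>i<length ts. Cons i ` graft_cut (cutR (child_cut c i) (ts!i)) (cut_forest (child_cut c i) (ts!i)))"
        using False ne by (simp add: cut_forest.simps cutR_SN graft_cut.simps chunks_cut_forest)
      also have "\<dots> = (\<Union>i<length ts. Cons i ` child_cut c i)" using IH by simp
      also have "\<dots> = c" using B(1) by (rule UN_child_cut)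
      finally show ?thesis .
    qed
  qed
qed

lemma cutP_conv_cut_forest: "adm s c \<Longrightarrow> cutP c s = filter (\<lambda>g. \<not> is_leaf g) (cut_forest c s)"
proof (induction s arbitrary: c)
  case (SN ts l)
  show ?case
  proof (cases "[] \<in> c")
    case True
    then have "ts \<noteq> []" using SN.prems by (auto simp: adm_SN)
    then show ?thesis using True by (simp add: cut_forest.simps cutP_SN)
  next
    case False
    then have B: "\<And>i. i < length ts \<Longrightarrow> adm (ts ! i) (child_cut c i)"
      using SN.prems by (auto simp: adm_SN)
    have IH: "\<And>i. i < length ts \<Longrightarrow> cutP (child_cut c i) (ts!i) = filter (\<lambda>g. \<not> is_leaf g) (cut_forest (child_cut c i) (ts!i))"
      using SN.IH B nth_mem by blast
    show ?thesis
    proof (cases "ts = []")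
      case True
      with False show ?thesis by (simp add: cut_forest.simps cutP_SN)
    next
      case ne: False
      have "cutP c (SN ts l) = concat (map (\<lambda>i. filter (\<lambda>g. \<not> is_leaf g) (cut_forest (child_cut c i) (ts!i))) [0..<length ts])"
        using False IH by (simp add: cutP_SN cong: map_upt_cong)
      also have "\<dots> = filter (\<lambda>g. \<not> is_leaf g) (cut_forest c (SN ts l))"
        using False ne by (simp add: cut_forest.simps filter_concat comp_def)
      finally show ?thesis .
    qed
  qed
qed

lemma last_concat_upt: "0 < n \<Longrightarrow> f (n - 1) \<noteq> [] \<Longrightarrow> last (concat (map f [0..<n])) = last (f (n - 1))"
proof -
  assume n: "0 < n" and ne: "f (n - 1) \<noteq> []"
  then have "[0..<n] = [0..<n-1] @ [n-1]" by (metis Suc_diff_1 upt_Suc_append zero_le)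
  then show ?thesis using ne by simp
qed

lemma cut_forest_nonempty: "cut_forest c s \<noteq> []"
  using length_cut_forest[of c s] nleaves_pos[of "cutR c s"] by auto

lemma avoids_right_SN:
  assumes ts: "ts \<noteq> []" and c: "\<forall>p\<in>c. \<exists>i q. p = i # q \<and> i < length ts"
  shows "avoids_right (SN ts l) c = avoids_right (last ts) (child_cut c (length ts - 1))"
    (is "?L = avoids_right (last ts) (child_cut c ?k)")
proof
  assume L: ?L
  show "avoids_right (last ts) (child_cut c ?k)" unfolding avoids_right_def
  proof (intro ballI impI)
    fix p q assume "p \<in> child_cut c ?k" "q \<in> leafv (last ts)" "on_right (last ts) q"
    then have "?k # p \<in> c" "?k # q \<in> leafv (SN ts l)" "on_right (SN ts l) (?k # q)"
      using ts by (auto simp: child_cut_def leafv_SN last_conv_nth)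
    then show "\<not> prefix p q" using L unfolding avoids_right_def by fastforce
  qed
next
  assume R: "avoids_right (last ts) (child_cut c ?k)"
  show ?L unfolding avoids_right_def
  proof (intro ballI impI notI)
    fix p q assume pq: "p \<in> c" "q \<in> leafv (SN ts l)" "on_right (SN ts l) q" "prefix p q"
    obtain i p' where p: "p = i # p'" using c pq by blast
    obtain j q' where q: "q = j # q'" "q' \<in> leafv (ts ! j)" using pq ts by (auto simp: leafv_SN)
    have "j = ?k" "on_right (last ts) q'" using pq q ts by (auto simp: last_conv_nth)
    moreover have "i = j" "prefix p' q'" using pq p q by auto
    ultimately show False using R q pq p ts by (auto simp: avoids_right_def child_cut_def last_conv_nth)
  qed
qed

lemma avoids_right_cut_forest: "adm s c \<Longrightarrow> avoids_right s c = is_leaf (last (cut_forest c s))"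
proof (induction s arbitrary: c)
  case (SN ts l)
  show ?case
  proof (cases "[] \<in> c")
    case True
    then have "ts \<noteq> []" using SN.prems by (auto simp: adm_SN)
    moreover obtain q where "q \<in> leafv (SN ts l)" "on_right (SN ts l) q"
      using rightmost_leaf_exists by blast
    moreover have "\<not> avoids_right (SN ts l) c" unfolding avoids_right_def using True calculation Nil_prefix by blast
    ultimately show ?thesis using True by (simp add: cut_forest.simps)
  next
    case False
    then have B: "\<forall>p\<in>c. \<exists>i q. p = i # q \<and> i < length ts" "\<And>i. i < length ts \<Longrightarrow> adm (ts ! i) (child_cut c i)"
      using SN.prems by (auto simp: adm_SN)
    show ?thesis
    proof (cases "ts = []")
      case True
      then have "c = {}" using B by auto
      with True show ?thesis by (simp add: cut_forest.simps avoids_right_def)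
    next
      case ne: False
      have "last (cut_forest c (SN ts l)) = last (cut_forest (child_cut c (length ts - 1)) (last ts))"
        using False ne by (simp add: cut_forest.simps last_concat_upt cut_forest_nonempty last_conv_nth)
      moreover have "avoids_right (last ts) (child_cut c (length ts - 1)) =
          is_leaf (last (cut_forest (child_cut c (length ts - 1)) (last ts)))"
        using SN.IH B ne by (simp add: last_conv_nth)
      ultimately show ?thesis using avoids_right_SN[OF ne B(1)] by simp
    qed
  qed
qed

definition graftable :: "'a stree \<Rightarrow> 'a stree list \<Rightarrow> bool" where
  "graftable r gts = (reduced_stree r \<and> (\<forall>g\<in>set gts. reduced_stree g) \<and> length gts = nleaves r)"

lemma graftable_leaf: "graftable (SN [] l) gts \<Longrightarrow> l = [] \<and> (\<exists>g. gts = [g] \<and> reduced_stree g)"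
  by (cases gts) (auto simp: graftable_def reduced_stree_SN)

lemma graftable_chunk:
  assumes "graftable (SN ts l) gts" "ts \<noteq> []" "i < length ts"
  shows "graftable (ts ! i) (chunks (map nleaves ts) gts ! i)"
proof -
  have "sum_list (map nleaves ts) = length gts" using assms by (simp add: graftable_def)
  then have "length (chunks (map nleaves ts) gts ! i) = nleaves (ts ! i)"
    using assms length_chunks_nth[of i "map nleaves ts" gts] by simp
  moreover have "set (chunks (map nleaves ts) gts ! i) \<subseteq> set gts" using assms by (simp add: set_chunks_nth)
  moreover have "reduced_stree (ts ! i)" using assms by (auto simp: graftable_def reduced_stree_SN)
  ultimately show ?thesis using assms by (auto simp: graftable_def)
qed

lemma concat_chunks_graftable:
  assumes "graftable (SN ts l) gts" "ts \<noteq> []"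
  shows "concat (map (\<lambda>i. chunks (map nleaves ts) gts ! i) [0..<length ts]) = gts"
  using assms by (intro concat_chunks_upt) (auto simp: graftable_def)

lemma graft_node: "ts \<noteq> [] \<Longrightarrow> graft (SN ts l) gs = SN (map (\<lambda>i. graft (ts ! i) (chunks (map nleaves ts) gs ! i)) [0..<length ts]) l"
  by (simp add: graft.simps)

lemma cutR_UN: "cutR (\<Union>x<n. Cons x ` A x) (SN (map g [0..<n]) l) = SN (map (\<lambda>i. cutR (A i) (g i)) [0..<n]) l"
proof -
  have "[] \<notin> (\<Union>x<n. Cons x ` A x)" by auto
  moreover have "map (\<lambda>i. cutR (child_cut (\<Union>x<n. Cons x ` A x) i) (map g [0..<n] ! i)) [0..<length (map g [0..<n])]
     = map (\<lambda>i. cutR (A i) (g i)) [0..<n]"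
    by (rule nth_equalityI) (auto simp: child_cut_UN)
  ultimately show ?thesis by (simp only: cutR_SN if_False)
qed

lemma cut_forest_UN: "n \<noteq> 0 \<Longrightarrow> cut_forest (\<Union>x<n. Cons x ` A x) (SN (map g [0..<n]) l) = concat (map (\<lambda>i. cut_forest (A i) (g i)) [0..<n])"
proof -
  assume n: "n \<noteq> 0"
  have "[] \<notin> (\<Union>x<n. Cons x ` A x)" by auto
  moreover have "map g [0..<n] \<noteq> []" using n by simp
  moreover have "map (\<lambda>i. cut_forest (child_cut (\<Union>x<n. Cons x ` A x) i) (map g [0..<n] ! i)) [0..<length (map g [0..<n])]
     = map (\<lambda>i. cut_forest (A i) (g i)) [0..<n]"
    by (rule nth_equalityI) (auto simp: child_cut_UN)
  ultimately show ?thesis by (simp only: cut_forest.simps if_False)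
qed

lemma reduced_stree_graft: "graftable r gts \<Longrightarrow> reduced_stree (graft r gts)"
proof (induction r arbitrary: gts)
  case (SN ts l)
  show ?case
  proof (cases "ts = []")
    case True
    then obtain g where "gts = [g]" "reduced_stree g" using graftable_leaf SN.prems by blast
    then show ?thesis using True by (simp add: graft.simps)
  next
    case False
    have IH: "\<And>i. i < length ts \<Longrightarrow> reduced_stree (graft (ts ! i) (chunks (map nleaves ts) gts ! i))"
      using SN.IH graftable_chunk[OF SN.prems False] nth_mem by blast
    show ?thesis using False SN.prems IH by (auto simp: graft_node reduced_stree_SN graftable_def)
  qed
qed

lemma adm_graft_cut: "graftable r gts \<Longrightarrow> adm (graft r gts) (graft_cut r gts)"
proof (induction r arbitrary: gts)
  case (SN ts l)
  show ?case
  proof (cases "ts = []")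
    case True
    then obtain g where g: "gts = [g]" "reduced_stree g" using graftable_leaf SN.prems by blast
    show ?thesis
    proof (cases "is_leaf g")
      case True then show ?thesis using g \<open>ts = []\<close> by (simp add: graft.simps graft_cut.simps adm_empty)
    next
      case False
      then obtain ts' l' where "g = SN ts' l'" "ts' \<noteq> []" by (cases g) auto
      then show ?thesis using g \<open>ts = []\<close> by (simp add: graft.simps graft_cut.simps adm_SN)
    qed
  next
    case False
    have IH: "\<And>i. i < length ts \<Longrightarrow> adm (graft (ts ! i) (chunks (map nleaves ts) gts ! i)) (graft_cut (ts ! i) (chunks (map nleaves ts) gts ! i))"
      using SN.IH graftable_chunk[OF SN.prems False] nth_mem by blast
    show ?thesis using False IH
      by (auto simp: graft_node graft_cut.simps adm_SN child_cut_UN)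
  qed
qed

lemma cutR_graft: "graftable r gts \<Longrightarrow> cutR (graft_cut r gts) (graft r gts) = r"
proof (induction r arbitrary: gts)
  case (SN ts l)
  show ?case
  proof (cases "ts = []")
    case True
    then obtain g where g: "gts = [g]" "reduced_stree g" "l = []" using graftable_leaf SN.prems by blast
    show ?thesis
    proof (cases "is_leaf g")
      case True
      then have "g = SN [] []" using g reduced_stree_leaf by blast
      then show ?thesis using g True \<open>ts = []\<close> by (simp add: graft.simps graft_cut.simps cutR_SN)
    next
      case False
      then show ?thesis using g \<open>ts = []\<close> by (cases g) (simp add: graft.simps graft_cut.simps cutR_SN)
    qed
  next
    case False
    have IH: "\<And>i. i < length ts \<Longrightarrow> cutR (graft_cut (ts ! i) (chunks (map nleaves ts) gts ! i)) (graft (ts ! i) (chunks (map nleaves ts) gts ! i)) = ts ! i"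
      using SN.IH graftable_chunk[OF SN.prems False] nth_mem by blast
    have "cutR (graft_cut (SN ts l) gts) (graft (SN ts l) gts) =
       SN (map (\<lambda>i. cutR (graft_cut (ts ! i) (chunks (map nleaves ts) gts ! i)) (graft (ts ! i) (chunks (map nleaves ts) gts ! i))) [0..<length ts]) l"
      using False by (simp add: graft_node graft_cut.simps cutR_UN)
    also have "\<dots> = SN ts l" using IH by (simp add: map_nth cong: map_upt_cong)
    finally show ?thesis .
  qed
qed

lemma cut_forest_graft: "graftable r gts \<Longrightarrow> cut_forest (graft_cut r gts) (graft r gts) = gts"
proof (induction r arbitrary: gts)
  case (SN ts l)
  show ?case
  proof (cases "ts = []")
    case True
    then obtain g where g: "gts = [g]" "reduced_stree g" "l = []" using graftable_leaf SN.prems by blast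
    show ?thesis
    proof (cases "is_leaf g")
      case True
      then have "g = SN [] []" using g reduced_stree_leaf by blast
      then show ?thesis using g True \<open>ts = []\<close> by (simp add: graft.simps graft_cut.simps cut_forest.simps)
    next
      case False
      then show ?thesis using g \<open>ts = []\<close> by (cases g) (simp add: graft.simps graft_cut.simps cut_forest.simps)
    qed
  next
    case False
    have IH: "\<And>i. i < length ts \<Longrightarrow> cut_forest (graft_cut (ts ! i) (chunks (map nleaves ts) gts ! i)) (graft (ts ! i) (chunks (map nleaves ts) gts ! i)) = chunks (map nleaves ts) gts ! i"
      using SN.IH graftable_chunk[OF SN.prems False] nth_mem by blast
    have "cut_forest (graft_cut (SN ts l) gts) (graft (SN ts l) gts) =
       concat (map (\<lambda>i. cut_forest (graft_cut (ts ! i) (chunks (map nleaves ts) gts ! i)) (graft (ts ! i) (chunks (map nleaves ts) gts ! i))) [0..<length ts])"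
      using False by (simp add: graft_node graft_cut.simps cut_forest_UN)
    also have "\<dots> = gts" using IH concat_chunks_graftable[OF SN.prems False] by (simp cong: map_upt_cong)
    finally show ?thesis .
  qed
qed

lemma graft_marks_readings: "graftable r gts \<Longrightarrow> marked (graft_marks r gts) = reading r \<and> gaps (graft_marks r gts) = map reading gts
   \<and> map fst (graft_marks r gts) = reading (graft r gts)"
proof (induction r arbitrary: gts)
  case (SN ts l)
  show ?case
  proof (cases "ts = []")
    case True
    then obtain g where g: "gts = [g]" "reduced_stree g" "l = []" using graftable_leaf SN.prems by blast
    then show ?thesis using True by (simp add: graft.simps graft_marks.simps marked_def comp_def)
  next
    case False
    define ch where "ch = (\<lambda>i. chunks (map nleaves ts) gts ! i)"
    have IH: "\<And>i. i < length ts \<Longrightarrow> marked (graft_marks (ts ! i) (ch i)) = reading (ts ! i) \<and> gaps (graft_marks (ts ! i) (ch i)) = map reading (ch i)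
   \<and> map fst (graft_marks (ts ! i) (ch i)) = reading (graft (ts ! i) (ch i))"
      using SN.IH graftable_chunk[OF SN.prems False] nth_mem unfolding ch_def by blast
    have len: "length (map (\<lambda>i. graft_marks (ts ! i) (ch i)) [0..<length ts]) = Suc (length l)"
      using SN.prems False by (auto simp: graftable_def reduced_stree_SN)
    have graft_marks: "graft_marks (SN ts l) gts = ilv (map (\<lambda>i. graft_marks (ts ! i) (ch i)) [0..<length ts]) (map (\<lambda>a. (a, True)) l)"
      using False by (simp add: graft_marks.simps ch_def)
    have 1: "marked (graft_marks (SN ts l) gts) = reading (SN ts l)"
      using len IH by (simp add: graft_marks marked_ilv map_conv_nth[of reading ts] cong: map_upt_cong)
    have "gaps (graft_marks (SN ts l) gts) = concat (map (\<lambda>i. map reading (ch i)) [0..<length ts])"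
      using len IH by (simp add: graft_marks gaps_ilv cong: map_upt_cong)
    also have "\<dots> = map reading (concat (map ch [0..<length ts]))" by (simp add: map_concat comp_def)
    also have "\<dots> = map reading gts" using concat_chunks_graftable[OF SN.prems False] by (simp add: ch_def)
    finally have 2: "gaps (graft_marks (SN ts l) gts) = map reading gts" .
    have "map fst (graft_marks (SN ts l) gts) = ilv (map (\<lambda>i. reading (graft (ts ! i) (ch i))) [0..<length ts]) l"
      using len IH by (simp add: graft_marks map_fst_ilv cong: map_upt_cong)
    also have "\<dots> = reading (graft (SN ts l) gts)"
      using False by (simp add: graft_node reading_SN ch_def cong: map_upt_cong)
    finally show ?thesis using 1 2 by blast
  qed
qed



lemma iota_Nil: "iota [] = vone"
  by (simp add: iota_def)

lemma iota_Cons: "iota (w # ws) = vmult (iota_word w) (iota ws)"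
  by (simp add: iota_def)

lemma iota_word_eq_0: "length h \<noteq> 1 \<Longrightarrow> iota_word u h = 0"
  by (auto simp: iota_word_def)

lemma vmult_iota_word: "vmult (iota_word u) Y q = (case q of [] \<Rightarrow> 0 | x # q' \<Rightarrow> iota_word u [x] * Y q')"
proof (cases q)
  case Nil then show ?thesis by (simp add: vmult_def iota_word_eq_0)
next
  case (Cons x q')
  have "vmult (iota_word u) Y q = (\<Sum>i\<le>length q. iota_word u (take i q) * Y (drop i q))"
    by (simp add: vmult_def)
  also have "\<dots> = iota_word u (take 1 q) * Y (drop 1 q)"
  proof (rule sum_eq_single)
    show "finite {..length q}" by simp
    show "1 \<in> {..length q}" using Cons by simp
    fix i assume "i \<in> {..length q}" "i \<noteq> 1"
    then have "length (take i q) \<noteq> 1" by auto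
    then show "iota_word u (take i q) * Y (drop i q) = 0" by (simp add: iota_word_eq_0)
  qed
  finally show ?thesis using Cons by simp
qed

lemma iota_single: "iota [u] = iota_word u"
proof
  fix q
  show "iota [u] q = iota_word u q"
    by (cases q rule: remdups_adj.cases) (auto simp: iota_Cons iota_Nil vmult_iota_word vone_def iota_word_eq_0)
qed

lemma vmult_assoc_iota_word: "vmult (vmult (iota_word u) A) B = vmult (iota_word u) (vmult A B)"
proof
  fix q
  show "vmult (vmult (iota_word u) A) B q = vmult (iota_word u) (vmult A B) q"
  proof (cases q)
    case Nil
    then show ?thesis by (simp add: vmult_def vmult_iota_word)
  next
    case (Cons x q')
    have "vmult (vmult (iota_word u) A) B q = (\<Sum>i\<le>Suc (length q'). vmult (iota_word u) A (take i q) * B (drop i q))"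
      using Cons by (simp add: vmult_def)
    also have "\<dots> = vmult (iota_word u) A (take 0 q) * B (drop 0 q) + (\<Sum>i\<le>length q'. vmult (iota_word u) A (take (Suc i) q) * B (drop (Suc i) q))"
      by (rule sum.atMost_Suc_shift)
    also have "\<dots> = (\<Sum>i\<le>length q'. iota_word u [x] * (A (take i q') * B (drop i q')))"
      using Cons by (simp add: vmult_iota_word mult.assoc)
    also have "\<dots> = iota_word u [x] * vmult A B q'" by (simp add: vmult_def sum_distrib_left)
    also have "\<dots> = vmult (iota_word u) (vmult A B) q" using Cons by (simp add: vmult_iota_word)
    finally show ?thesis .
  qed
qed

lemma iota_append: "iota (u1 @ u2) = vmult (iota u1) (iota u2)"
proof (induction u1)
  case Nil then show ?case by (simp add: iota_Nil vmult_vone_left)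
next
  case (Cons w u1) then show ?case by (simp add: iota_Cons vmult_assoc_iota_word)
qed

lemma iota2_append: "iota2 (u1 @ u2, v1 @ v2) = tmult (iota2 (u1, v1)) (iota2 (u2, v2))"
proof
  fix pq :: "'a dtree list \<times> 'a dtree list"
  obtain p q where pq: "pq = (p, q)" by (cases pq)
  have "iota2 (u1 @ u2, v1 @ v2) (p, q) = vmult (iota u1) (iota u2) p * vmult (iota v1) (iota v2) q"
    by (simp add: iota2_def iota_append)
  also have "\<dots> = (\<Sum>i\<le>length p. \<Sum>j\<le>length q. (iota u1 (take i p) * iota u2 (drop i p)) * (iota v1 (take j q) * iota v2 (drop j q)))"
    by (simp add: vmult_def sum_product)
  also have "\<dots> = tmult (iota2 (u1, v1)) (iota2 (u2, v2)) (p, q)"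
    by (simp add: tmult_def iota2_def mult_ac)
  finally show "iota2 (u1 @ u2, v1 @ v2) pq = tmult (iota2 (u1, v1)) (iota2 (u2, v2)) pq" using pq by simp
qed


lemma iota2_Nil: "iota2 ([], []) = tone"
  by (rule ext) (auto simp: iota2_def iota_Nil vone_def tone_def)

lemma supp_iota_word: "supp (iota_word w) = (\<lambda>T. [(T, w)]) ` reduced_trees (length w + 1)"
  by (auto simp: supp_def iota_word_def reduced_trees_def)

lemma finite_supp_iota_word: "finite (supp (iota_word w))"
  unfolding supp_iota_word using finite_reduced_trees by simp

lemma finite_supp_iota: "finite (supp (iota ws))"
  by (induction ws) (simp_all add: iota_Nil iota_Cons finite_supp_vone finite_supp_vmult finite_supp_iota_word)

section \<open>Counting cuts\<close>

definition trees_reading :: "'a list \<Rightarrow> 'a dtree list \<Rightarrow> 'a stree set" where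
  "trees_reading u p = {r. reduced_stree r \<and> reading r = u \<and> tob r = p}"

lemma reduced_stree_reading_NilD: "reduced_stree r \<Longrightarrow> reading r = [] \<Longrightarrow> r = SN [] []"
  using reduced_stree_reading_Nil reduced_stree_leaf by blast

lemma trees_reading_subsingleton:
  assumes "r \<in> trees_reading u p" and "r' \<in> trees_reading u p"
  shows "r = r'"
proof -
  from assms have r: "reduced_stree r" "reading r = u" "tob r = p"
    and r': "reduced_stree r'" "reading r' = u" "tob r' = p"
    by (simp_all add: trees_reading_def)
  show ?thesis
  proof (cases "u = []")
    case True
    then show ?thesis using r r' reduced_stree_reading_NilD by metis
  next
    case False
    then have "[dec r] = [dec r']"
      using tob_reduced_stree[OF r(1)] tob_reduced_stree[OF r'(1)] r(2,3) r'(2,3) by simp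
    then show ?thesis using reduced_stree_dec_inj[OF r(1) r'(1)] by simp
  qed
qed

lemma trees_reading_Nil: "trees_reading [] p = (if p = [] then {SN [] []} else {})"
proof -
  have leaf: "reduced_stree (SN [] [])" "reading (SN [] []) = []" "tob (SN [] []) = []"
    by (simp_all add: tob_def reduced_stree_def)
  have "r \<in> trees_reading [] p \<longleftrightarrow> r = SN [] [] \<and> p = []" for r :: "'a stree"
    using reduced_stree_reading_NilD[of r] leaf by (auto simp: trees_reading_def)
  then show ?thesis by auto
qed

lemma trees_reading_nonempty_iff:
  assumes "u \<noteq> []"
  shows "trees_reading u p \<noteq> {} \<longleftrightarrow> (\<exists>T. p = [(T, u)] \<and> reduced T \<and> leaves T = length u + 1)"
proof
  assume "trees_reading u p \<noteq> {}"
  then obtain r where r: "reduced_stree r" "reading r = u" "tob r = p" by (auto simp: trees_reading_def)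
  then show "\<exists>T. p = [(T, u)] \<and> reduced T \<and> leaves T = length u + 1"
    using assms tob_reduced_stree[OF r(1)] length_reading_reduced[OF r(1)]
    by (intro exI[of _ "shape r"]) (auto simp: dec_def reduced_stree_def leaves_shape)
next
  assume "\<exists>T. p = [(T, u)] \<and> reduced T \<and> leaves T = length u + 1"
  then obtain T s where "p = [(T, u)]" "reduced T" "swf s" "shape s = T" "reading s = u"
    using decoration_exists by blast
  then have "s \<in> trees_reading u p"
    using assms tob_reduced_stree by (auto simp: trees_reading_def reduced_stree_def dec_def)
  then show "trees_reading u p \<noteq> {}" by blast
qed

lemma card_subsingleton:
  assumes "\<And>a b. a \<in> A \<Longrightarrow> b \<in> A \<Longrightarrow> a = b"
  shows "finite A \<and> card A = (if A = {} then 0 else 1)"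
proof (cases "A = {}")
  case False
  then obtain a where "a \<in> A" by blast
  with assms have "A = {a}" by blast
  then show ?thesis by simp
qed simp

lemma card_trees_reading:
  "finite (trees_reading u p) \<and> card (trees_reading u p) = iota (if u = [] then [] else [u]) p"
proof (cases "u = []")
  case True
  then show ?thesis by (simp add: trees_reading_Nil iota_Nil vone_def)
next
  case False
  have "iota [u] p = (if trees_reading u p = {} then 0 else 1)"
    using trees_reading_nonempty_iff[OF False] by (simp add: iota_single iota_word_def)
  moreover have "finite (trees_reading u p) \<and> card (trees_reading u p) = (if trees_reading u p = {} then 0 else 1)"
    by (rule card_subsingleton) (rule trees_reading_subsingleton)
  ultimately show ?thesis using False by simp
qed

definition forests_reading :: "'a list list \<Rightarrow> 'a dtree list \<Rightarrow> 'a stree list set" where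
  "forests_reading gs q = {gts. list_all2 (\<lambda>g u. reduced_stree g \<and> reading g = u) gts gs
      \<and> map dec (filter (\<lambda>g. \<not> is_leaf g) gts) = q}"

lemma forests_reading_ConsE:
  assumes "gts \<in> forests_reading (u # gs) q"
  obtains g gts' where "gts = g # gts'" "reduced_stree g" "reading g = u"
    "list_all2 (\<lambda>g u. reduced_stree g \<and> reading g = u) gts' gs"
    "map dec (filter (\<lambda>g. \<not> is_leaf g) gts) = q"
  using assms by (auto simp: forests_reading_def list_all2_Cons2)

lemma forests_reading_Cons_Nil: "forests_reading ([] # gs) q = Cons (SN [] []) ` forests_reading gs q"
proof
  show "forests_reading ([] # gs) q \<subseteq> Cons (SN [] []) ` forests_reading gs q"
  proof
    fix gts assume "gts \<in> forests_reading ([] # gs) q"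
    then obtain g gts' where g: "gts = g # gts'" "reduced_stree g" "reading g = []"
      "list_all2 (\<lambda>g u. reduced_stree g \<and> reading g = u) gts' gs"
      "map dec (filter (\<lambda>g. \<not> is_leaf g) gts) = q"
      by (rule forests_reading_ConsE)
    moreover from g have "g = SN [] []" by (intro reduced_stree_reading_NilD)
    ultimately show "gts \<in> Cons (SN [] []) ` forests_reading gs q"
      by (simp add: forests_reading_def)
  qed
  show "Cons (SN [] []) ` forests_reading gs q \<subseteq> forests_reading ([] # gs) q"
    by (auto simp: forests_reading_def reduced_stree_def)
qed

lemma forests_reading_Cons_Nil_right:
  assumes "u \<noteq> []"
  shows "forests_reading (u # gs) [] = {}"
proof -
  have "\<not> is_leaf g" if "reduced_stree g" "reading g = u" for g
    using assms that reduced_stree_reading_Nil by blast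
  then show ?thesis by (auto elim!: forests_reading_ConsE)
qed

lemma forests_reading_Cons_Cons:
  assumes "u \<noteq> []"
  shows "forests_reading (u # gs) (x # q) =
    (\<lambda>(g, gts). g # gts) ` (trees_reading u [x] \<times> forests_reading gs q)"
proof
  have tob: "\<not> is_leaf g \<and> tob g = [dec g]" if "reduced_stree g" "reading g = u" for g
    using assms that reduced_stree_reading_Nil tob_reduced_stree by blast
  show "forests_reading (u # gs) (x # q) \<subseteq> (\<lambda>(g, gts). g # gts) ` (trees_reading u [x] \<times> forests_reading gs q)"
  proof
    fix gts assume "gts \<in> forests_reading (u # gs) (x # q)"
    then obtain g gts' where g: "gts = g # gts'" "reduced_stree g" "reading g = u"
      "list_all2 (\<lambda>g u. reduced_stree g \<and> reading g = u) gts' gs"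
      "map dec (filter (\<lambda>g. \<not> is_leaf g) gts) = x # q"
      by (rule forests_reading_ConsE)
    then have "g \<in> trees_reading u [x]" "gts' \<in> forests_reading gs q"
      using tob[OF g(2,3)] by (simp_all add: trees_reading_def forests_reading_def)
    then show "gts \<in> (\<lambda>(g, gts). g # gts) ` (trees_reading u [x] \<times> forests_reading gs q)"
      using g(1) by force
  qed
  show "(\<lambda>(g, gts). g # gts) ` (trees_reading u [x] \<times> forests_reading gs q) \<subseteq> forests_reading (u # gs) (x # q)"
  proof
    fix y assume "y \<in> (\<lambda>(g, gts). g # gts) ` (trees_reading u [x] \<times> forests_reading gs q)"
    then obtain g gts where y: "y = g # gts" "g \<in> trees_reading u [x]" "gts \<in> forests_reading gs q"
      by auto
    then have "reduced_stree g" "reading g = u" "tob g = [x]" by (simp_all add: trees_reading_def)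
    then show "y \<in> forests_reading (u # gs) (x # q)"
      using y tob by (simp add: forests_reading_def)
  qed
qed

lemma card_forests_reading:
  "finite (forests_reading gs q) \<and> card (forests_reading gs q) = iota (filter (\<lambda>u. u \<noteq> []) gs) q"
proof (induction gs arbitrary: q)
  case Nil
  have "forests_reading [] q = (if q = [] then {[]} else {})" by (auto simp: forests_reading_def)
  then show ?case by (simp add: iota_Nil vone_def)
next
  case (Cons u gs)
  show ?case
  proof (cases "u = []")
    case True
    then show ?thesis using Cons.IH by (simp add: forests_reading_Cons_Nil card_image)
  next
    case False
    show ?thesis
    proof (cases q)
      case Nil
      then show ?thesis using False by (simp add: forests_reading_Cons_Nil_right iota_Cons vmult_iota_word)
    next
      case (Cons x q')
      have "inj_on (\<lambda>(g, gts). g # gts) (trees_reading u [x] \<times> forests_reading gs q')"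
        by (auto simp: inj_on_def)
      then show ?thesis
        using False Cons Cons.IH[of q'] card_trees_reading[of u "[x]"]
        by (simp add: forests_reading_Cons_Cons card_image card_cartesian_product iota_Cons
            vmult_iota_word iota_single iota_Nil vone_def)
    qed
  qed
qed

text \<open>The flag \<open>b\<close> selects the cuts counted by \<open>\<Delta>\<^sup>+\<^sub>\<prec>\<close>: those leaving the rightmost leaf in \<open>R^c\<close>.\<close>

definition cuts_of :: "bool \<Rightarrow> 'a list \<Rightarrow> 'a dtree list \<Rightarrow> 'a dtree list \<Rightarrow> ('a stree \<times> nat list set) set" where
  "cuts_of b w p q = {(s, c). reduced_stree s \<and> reading s = w \<and> adm s c \<and> (b \<longrightarrow> avoids_right s c)
       \<and> tob (cutR c s) = p \<and> map dec (cutP c s) = q}"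

definition grafts_of :: "bool \<Rightarrow> 'a list \<Rightarrow> 'a dtree list \<Rightarrow> 'a dtree list \<Rightarrow> ('a stree \<times> 'a stree list) set" where
  "grafts_of b w p q = {(r, gts). graftable r gts \<and> map fst (graft_marks r gts) = w
       \<and> (b \<longrightarrow> is_leaf (last gts)) \<and> tob r = p \<and> map dec (filter (\<lambda>g. \<not> is_leaf g) gts) = q}"

lemma cut_in_grafts_of:
  assumes "(s, c) \<in> cuts_of b w p q"
  shows "(cutR c s, cut_forest c s) \<in> grafts_of b w p q"
proof -
  from assms have s: "reduced_stree s" "reading s = w" "adm s c" "b \<longrightarrow> avoids_right s c"
    "tob (cutR c s) = p" "map dec (cutP c s) = q" by (auto simp: cuts_of_def)
  have g: "graftable (cutR c s) (cut_forest c s)"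
    using reduced_stree_cut[OF s(1), of c] length_cut_forest[of c s] by (simp add: graftable_def)
  have "map fst (graft_marks (cutR c s) (cut_forest c s)) = w"
    using graft_marks_readings[OF g] graft_cut_forest[of c s] s(2) by simp
  moreover have "b \<longrightarrow> is_leaf (last (cut_forest c s))" using s(3,4) avoids_right_cut_forest by blast
  moreover have "map dec (filter (\<lambda>g. \<not> is_leaf g) (cut_forest c s)) = q"
    using s(3,6) cutP_conv_cut_forest by metis
  ultimately show ?thesis using g s(5) by (simp add: grafts_of_def)
qed

lemma graft_in_cuts_of:
  assumes "(r, gts) \<in> grafts_of b w p q"
  shows "(graft r gts, graft_cut r gts) \<in> cuts_of b w p q"
proof -
  from assms have e: "graftable r gts" "map fst (graft_marks r gts) = w" "b \<longrightarrow> is_leaf (last gts)"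
    "tob r = p" "map dec (filter (\<lambda>g. \<not> is_leaf g) gts) = q" by (auto simp: grafts_of_def)
  have a: "adm (graft r gts) (graft_cut r gts)" using adm_graft_cut[OF e(1)] .
  have "reduced_stree (graft r gts)" using reduced_stree_graft[OF e(1)] .
  moreover have "reading (graft r gts) = w" using graft_marks_readings[OF e(1)] e(2) by simp
  moreover have "b \<longrightarrow> avoids_right (graft r gts) (graft_cut r gts)"
    using avoids_right_cut_forest[OF a] cut_forest_graft[OF e(1)] e(3) by simp
  moreover have "tob (cutR (graft_cut r gts) (graft r gts)) = p" using cutR_graft[OF e(1)] e(4) by simp
  moreover have "map dec (cutP (graft_cut r gts) (graft r gts)) = q"
    using cutP_conv_cut_forest[OF a] cut_forest_graft[OF e(1)] e(5) by simp
  ultimately show ?thesis using a by (simp add: cuts_of_def)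
qed

lemma bij_cuts_grafts: "bij_betw (\<lambda>(s, c). (cutR c s, cut_forest c s)) (cuts_of b w p q) (grafts_of b w p q)"
proof (rule bij_betw_byWitness[where f'="\<lambda>(r, gts). (graft r gts, graft_cut r gts)"])
  show "\<forall>x\<in>cuts_of b w p q. (\<lambda>(r, gts). (graft r gts, graft_cut r gts)) ((\<lambda>(s, c). (cutR c s, cut_forest c s)) x) = x"
    by (auto simp: cuts_of_def graft_cut_forest graft_cut_cut_forest)
  show "\<forall>x\<in>grafts_of b w p q. (\<lambda>(s, c). (cutR c s, cut_forest c s)) ((\<lambda>(r, gts). (graft r gts, graft_cut r gts)) x) = x"
    by (auto simp: grafts_of_def cutR_graft cut_forest_graft)
qed (use cut_in_grafts_of graft_in_cuts_of in auto)

definition marked_sets :: "bool \<Rightarrow> 'a list \<Rightarrow> nat set set" where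
  "marked_sets b w = {S. S \<subseteq> {..<length w} \<and> (b \<longrightarrow> length w - 1 \<in> S)}"

lemma finite_marked_sets: "finite (marked_sets b w)"
  by (rule finite_subset[of _ "Pow {..<length w}"]) (auto simp: marked_sets_def)

lemma mark_word_inj: "S \<subseteq> {..<length w} \<Longrightarrow> S' \<subseteq> {..<length w} \<Longrightarrow> mark_word S 0 w = mark_word S' 0 w \<Longrightarrow> S = S'"
  by (metis mark_word_set)

lemma list_all2_reading: "list_all2 (\<lambda>g u. reduced_stree g \<and> reading g = u) gts gs \<longleftrightarrow> (\<forall>g\<in>set gts. reduced_stree g) \<and> map reading gts = gs"
proof
  assume a: "list_all2 (\<lambda>g u. reduced_stree g \<and> reading g = u) gts gs"
  then have "length gts = length gs" by (rule list_all2_lengthD)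
  then show "(\<forall>g\<in>set gts. reduced_stree g) \<and> map reading gts = gs"
    using a by (auto simp: list_all2_conv_all_nth in_set_conv_nth intro: nth_equalityI)
next
  assume "(\<forall>g\<in>set gts. reduced_stree g) \<and> map reading gts = gs"
  then show "list_all2 (\<lambda>g u. reduced_stree g \<and> reading g = u) gts gs"
    by (auto simp: list_all2_conv_all_nth)
qed

lemma is_leaf_last_graft:
  assumes g: "graftable r gts" and w: "w \<noteq> []" and m: "graft_marks r gts = mark_word S 0 w"
  shows "is_leaf (last gts) \<longleftrightarrow> length w - 1 \<in> S"
proof -
  have gts: "\<forall>g\<in>set gts. reduced_stree g" "gts \<noteq> []"
    using g nleaves_pos[of r] by (auto simp: graftable_def)
  have "is_leaf (last gts) \<longleftrightarrow> last (map reading gts) = []"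
    using gts reduced_stree_reading_Nil[of "last gts"] by (simp add: last_map)
  also have "\<dots> \<longleftrightarrow> last (gaps (mark_word S 0 w)) = []"
    using graft_marks_readings[OF g] m by (metis (no_types))
  also have "\<dots> \<longleftrightarrow> length w - 1 \<in> S"
    using w last_gaps_Nil_iff[of "mark_word S 0 w"] last_mark_word[OF w] by (simp flip: length_greater_0_conv)
  finally show ?thesis .
qed

definition grafts_marked :: "bool \<Rightarrow> 'a list \<Rightarrow> 'a dtree list \<Rightarrow> 'a dtree list \<Rightarrow> nat set
    \<Rightarrow> ('a stree \<times> 'a stree list) set" where
  "grafts_marked b w p q S = {x \<in> grafts_of b w p q. graft_marks (fst x) (snd x) = mark_word S 0 w}"

lemma grafts_marked_eq:
  assumes w: "w \<noteq> []" and S: "S \<in> marked_sets b w"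
  shows "grafts_marked b w p q S =
    trees_reading (marked (mark_word S 0 w)) p \<times> forests_reading (gaps (mark_word S 0 w)) q"
    (is "_ = trees_reading (marked ?m) p \<times> forests_reading (gaps ?m) q")
proof
  show "grafts_marked b w p q S \<subseteq> trees_reading (marked ?m) p \<times> forests_reading (gaps ?m) q"
  proof
    fix x assume "x \<in> grafts_marked b w p q S"
    then obtain r gts where x: "x = (r, gts)" "graftable r gts" "graft_marks r gts = ?m" "tob r = p"
      "map dec (filter (\<lambda>g. \<not> is_leaf g) gts) = q" by (auto simp: grafts_marked_def grafts_of_def)
    have "marked ?m = reading r" "gaps ?m = map reading gts" using graft_marks_readings[OF x(2)] x(3) by auto
    then show "x \<in> trees_reading (marked ?m) p \<times> forests_reading (gaps ?m) q"
      using x by (auto simp: trees_reading_def forests_reading_def graftable_def list_all2_reading)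
  qed
  show "trees_reading (marked ?m) p \<times> forests_reading (gaps ?m) q \<subseteq> grafts_marked b w p q S"
  proof
    fix x assume "x \<in> trees_reading (marked ?m) p \<times> forests_reading (gaps ?m) q"
    then obtain r gts where x: "x = (r, gts)" "reduced_stree r" "reading r = marked ?m" "tob r = p"
      "\<forall>g\<in>set gts. reduced_stree g" "map reading gts = gaps ?m" "map dec (filter (\<lambda>g. \<not> is_leaf g) gts) = q"
      by (auto simp: trees_reading_def forests_reading_def list_all2_reading)
    have "length gts = length (gaps ?m)" using x(6) by (metis length_map)
    then have "length gts = nleaves r" using length_reading_reduced[OF x(2)] x(3) by (simp add: length_gaps)
    then have g: "graftable r gts" using x by (simp add: graftable_def)
    have m: "graft_marks r gts = ?m" using graft_marks_readings[OF g] x(3,6) marked_gaps_inj by metis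
    have "b \<longrightarrow> is_leaf (last gts)" using is_leaf_last_graft[OF g w m] S by (simp add: marked_sets_def)
    then show "x \<in> grafts_marked b w p q S" using g m x by (simp add: grafts_marked_def grafts_of_def)
  qed
qed

lemma grafts_of_UN_marked:
  assumes w: "w \<noteq> []"
  shows "grafts_of b w p q = (\<Union>S\<in>marked_sets b w. grafts_marked b w p q S)"
proof
  show "grafts_of b w p q \<subseteq> (\<Union>S\<in>marked_sets b w. grafts_marked b w p q S)"
  proof
    fix x assume xE: "x \<in> grafts_of b w p q"
    then obtain r gts where x: "x = (r, gts)" "graftable r gts" "map fst (graft_marks r gts) = w"
      "b \<longrightarrow> is_leaf (last gts)" by (auto simp: grafts_of_def)
    define S where "S = {j. j < length w \<and> snd (graft_marks r gts ! j)}"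
    have m: "graft_marks r gts = mark_word S 0 w" using mark_word_of[OF x(3)] by (simp add: S_def)
    then have "S \<in> marked_sets b w"
      using is_leaf_last_graft[OF x(2) w m] x(4) by (auto simp: marked_sets_def S_def)
    then show "x \<in> (\<Union>S\<in>marked_sets b w. grafts_marked b w p q S)"
      using xE m x(1) by (auto simp: grafts_marked_def)
  qed
qed (auto simp: grafts_marked_def)

lemma card_grafts_marked:
  assumes "w \<noteq> []" "S \<in> marked_sets b w"
  shows "finite (grafts_marked b w p q S) \<and> card (grafts_marked b w p q S) = iota (Rw S w) p * iota (Pw S w) q"
  using card_trees_reading[of "marked (mark_word S 0 w)" p] card_forests_reading[of "gaps (mark_word S 0 w)" q]
  by (simp add: grafts_marked_eq[OF assms] card_cartesian_product Rw_conv_marked Pw_conv_gaps)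

lemma card_cuts_of:
  assumes w: "w \<noteq> []"
  shows "finite (cuts_of b w p q) \<and>
    of_nat (card (cuts_of b w p q)) = (\<Sum>S\<in>marked_sets b w. iota (Rw S w) p * iota (Pw S w) q)"
proof -
  have disj: "grafts_marked b w p q S \<inter> grafts_marked b w p q S' = {}"
    if "S \<in> marked_sets b w" "S' \<in> marked_sets b w" "S \<noteq> S'" for S S'
    using that mark_word_inj[of S w S'] by (auto simp: grafts_marked_def marked_sets_def)
  have "card (cuts_of b w p q) = card (grafts_of b w p q)"
    using bij_cuts_grafts by (rule bij_betw_same_card)
  also have "\<dots> = (\<Sum>S\<in>marked_sets b w. card (grafts_marked b w p q S))"
    unfolding grafts_of_UN_marked[OF w] using finite_marked_sets card_grafts_marked[OF w] disj
    by (intro card_UN_disjoint) auto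
  finally have "of_nat (card (cuts_of b w p q)) = (\<Sum>S\<in>marked_sets b w. iota (Rw S w) p * iota (Pw S w) q)"
    using card_grafts_marked[OF w] by (simp cong: sum.cong)
  moreover have "finite (grafts_of b w p q)"
    unfolding grafts_of_UN_marked[OF w] using finite_marked_sets card_grafts_marked[OF w] by blast
  then have "finite (cuts_of b w p q)" using bij_cuts_grafts bij_betw_finite by blast
  ultimately show ?thesis by simp
qed

lemma DW_conv_Pow: "DW w = (\<lambda>y. of_nat (card {S \<in> Pow {..<length w}. True \<and> (Rw S w, Pw S w) = y}))"
  unfolding DW_def by (rule ext) (simp add: Pow_def)

lemma DWplus_conv_Pow: "DWplus w = (\<lambda>y. of_nat (card {S \<in> Pow {..<length w}. length w - 1 \<in> S \<and> (Rw S w, Pw S w) = y}))"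
  unfolding DWplus_def by (rule ext) (simp add: Pow_def conj_assoc)

lemma finite_supp_DW: "finite (supp (DW w))"
  unfolding DW_conv_Pow by (rule finite_supp_card) simp

lemma finite_supp_DWplus: "finite (supp (DWplus w))"
  unfolding DWplus_conv_Pow by (rule finite_supp_card) simp

lemma finite_supp_DT: "finite (supp (DT ws))"
proof (induction ws)
  case Nil then show ?case by (simp add: DT_def finite_supp_tone)
next
  case (Cons w ws) then show ?case by (simp add: DT_def finite_supp_tmult finite_supp_DW)
qed

lemma DH_single: "DH [t] = DHtree t"
  by (simp add: DH_def tmult_tone_right)

lemma DH_Cons: "DH (t # h) = tmult (DHtree t) (DH h)"
  by (simp add: DH_def)

text \<open>\<open>\<Phi>\<close> stands for \<open>DH\<close> or \<open>DHplus1\<close>: on a tree of shape \<open>T\<close> both count the cuts of the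
  unique decorated tree of that shape reading \<open>w\<close>, so summing over the shapes counts all cuts.\<close>

lemma lin_iota_word_card:
  assumes w: "w \<noteq> []"
    and Phi: "\<And>T. T \<in> reduced_trees (length w + 1) \<Longrightarrow> \<Phi> [(T, w)] (p, q) = of_nat (card {x \<in> cuts_of b w p q. shape (fst x) = T})"
  shows "lin \<Phi> (iota_word w) (p, q) = of_nat (card (cuts_of b w p q))"
proof -
  let ?T = "reduced_trees (length w + 1)"
  have e: "lin \<Phi> (iota_word w) = (\<lambda>c. \<Sum>b\<in>supp (iota_word w). iota_word w b * \<Phi> b c)"
    using finite_supp_iota_word by (rule lin_superset) simp
  have "lin \<Phi> (iota_word w) (p, q) = (\<Sum>h\<in>supp (iota_word w). iota_word w h * \<Phi> h (p, q))"
    by (simp add: e)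
  also have "\<dots> = (\<Sum>T\<in>?T. iota_word w [(T, w)] * \<Phi> [(T, w)] (p, q))"
    unfolding supp_iota_word by (subst sum.reindex) (auto simp: inj_on_def)
  also have "\<dots> = (\<Sum>T\<in>?T. of_nat (card {x \<in> cuts_of b w p q. shape (fst x) = T}))"
    by (rule sum.cong) (auto simp: Phi iota_word_def reduced_trees_def)
  also have "\<dots> = of_nat (\<Sum>T\<in>?T. card {x \<in> cuts_of b w p q. shape (fst x) = T})" by simp
  also have "(\<Sum>T\<in>?T. card {x \<in> cuts_of b w p q. shape (fst x) = T}) = card (cuts_of b w p q)"
  proof (rule card_eq_sum_card_fibres[symmetric])
    show "finite (cuts_of b w p q)" using card_cuts_of[OF w] by simp
    show "finite ?T" by (rule finite_reduced_trees)
    fix x assume "x \<in> cuts_of b w p q"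
    then obtain s c where x: "x = (s, c)" "reduced_stree s" "reading s = w" by (auto simp: cuts_of_def)
    then have "length (reading s) + 1 = nleaves s" using length_reading_reduced by blast
    then show "shape (fst x) \<in> ?T" using x by (simp add: reduced_trees_def reduced_stree_def leaves_shape)
  qed
  finally show ?thesis .
qed

lemma lin_DH_iota_word: "w \<noteq> [] \<Longrightarrow> lin DH (iota_word w) (p, q) = of_nat (card (cuts_of False w p q))"
proof (rule lin_iota_word_card)
  fix T assume T: "T \<in> reduced_trees (length (w::'a list) + 1)"
  have "{(s, c). swf s \<and> dec s = (T, w) \<and> adm s c \<and> (tob (cutR c s), map dec (cutP c s)) = (p, q)}
     = {x \<in> cuts_of False w p q. shape (fst x) = T}"
    using T by (auto simp: cuts_of_def dec_def reduced_stree_def reduced_trees_def)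
  then show "DH [(T, w)] (p, q) = of_nat (card {x \<in> cuts_of False w p q. shape (fst x) = T})"
    by (simp add: DH_single DHtree_def)
qed

lemma lin_DHplus1_iota_word: "w \<noteq> [] \<Longrightarrow> lin DHplus1 (iota_word w) (p, q) = of_nat (card (cuts_of True w p q))"
proof (rule lin_iota_word_card)
  fix T assume T: "T \<in> reduced_trees (length (w::'a list) + 1)"
  have "{(s, c). swf s \<and> dec s = (T, w) \<and> adm s c \<and> (\<forall>p\<in>c. \<forall>q\<in>leafv s. on_right s q \<longrightarrow> \<not> prefix p q)
        \<and> (tob (cutR c s), map dec (cutP c s)) = (p, q)}
     = {x \<in> cuts_of True w p q. shape (fst x) = T}"
    using T by (auto simp: cuts_of_def dec_def reduced_stree_def reduced_trees_def avoids_right_def)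
  then show "DHplus1 [(T, w)] (p, q) = of_nat (card {x \<in> cuts_of True w p q. shape (fst x) = T})"
    by (simp add: DHplus1_def DHplustree_def)
qed

lemma lin_iota2_DW: "lin iota2 (DW w) (p, q) = (\<Sum>S\<in>marked_sets False w. iota (Rw S w) p * iota (Pw S w) q)"
proof -
  have "lin iota2 (DW w) = (\<lambda>d. \<Sum>S\<in>{S \<in> Pow {..<length w}. True}. iota2 (Rw S w, Pw S w) d)"
    unfolding DW_conv_Pow by (rule lin_card) simp
  moreover have "{S \<in> Pow {..<length w}. True} = marked_sets False w" by (auto simp: marked_sets_def)
  ultimately show ?thesis by (simp add: iota2_def)
qed

lemma lin_iota2_DWplus: "lin iota2 (DWplus w) (p, q) = (\<Sum>S\<in>marked_sets True w. iota (Rw S w) p * iota (Pw S w) q)"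
proof -
  have "lin iota2 (DWplus w) = (\<lambda>d. \<Sum>S\<in>{S \<in> Pow {..<length w}. length w - 1 \<in> S}. iota2 (Rw S w, Pw S w) d)"
    unfolding DWplus_conv_Pow by (rule lin_card) simp
  moreover have "{S \<in> Pow {..<length w}. length w - 1 \<in> S} = marked_sets True w" by (auto simp: marked_sets_def)
  ultimately show ?thesis by (simp add: iota2_def)
qed

lemma lin_DH_iota_word_eq: "w \<noteq> [] \<Longrightarrow> lin DH (iota_word w) = lin iota2 (DW w)"
proof
  fix pq :: "'a dtree list \<times> 'a dtree list"
  assume w: "w \<noteq> []"
  obtain p q where pq: "pq = (p, q)" by (cases pq)
  show "lin DH (iota_word w) pq = lin iota2 (DW w) pq"
    unfolding pq lin_DH_iota_word[OF w] lin_iota2_DW using card_cuts_of[OF w] by simp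
qed

lemma lin_DHplus1_iota_word_eq: "w \<noteq> [] \<Longrightarrow> lin DHplus1 (iota_word w) = lin iota2 (DWplus w)"
proof
  fix pq :: "'a dtree list \<times> 'a dtree list"
  assume w: "w \<noteq> []"
  obtain p q where pq: "pq = (p, q)" by (cases pq)
  show "lin DHplus1 (iota_word w) pq = lin iota2 (DWplus w) pq"
    unfolding pq lin_DHplus1_iota_word[OF w] lin_iota2_DWplus using card_cuts_of[OF w] by simp
qed


lemma lin_DH_iota:
  "(\<forall>u\<in>set ws. u \<noteq> []) \<Longrightarrow> lin DH (iota ws) = lin iota2 (DT ws)"
proof (induction ws)
  case Nil
  have 1: "lin DH (iota []) = DH []" by (simp add: iota_Nil vone_eq_delta lin_delta)
  have 2: "DH [] = tone" by (simp add: DH_def)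
  have 3: "lin iota2 (DT []) = iota2 ([], [])" by (simp add: DT_def tone_eq_delta lin_delta)
  show ?case unfolding 1 2 3 iota2_Nil ..
next
  case (Cons w ws)
  then have w: "w \<noteq> []" and ws: "\<forall>u\<in>set ws. u \<noteq> []" by auto
  have "lin DH (iota (w # ws)) = lin DH (vmult (iota_word w) (iota ws))" by (simp add: iota_Cons)
  also have "\<dots> = tmult (lin DH (iota_word w)) (lin DH (iota ws))"
  proof (rule lin_vmult[OF finite_supp_iota_word finite_supp_iota])
    fix h1 h2 assume "iota_word w h1 \<noteq> 0"
    then obtain T where "h1 = [(T, w)]" by (auto simp: iota_word_def split: if_splits)
    then have "DH (h1 @ h2) = DH ((T, w) # h2)" "DH h1 = DHtree (T, w)" by (simp_all add: DH_single)
    then show "DH (h1 @ h2) = tmult (DH h1) (DH h2)" by (simp only: DH_Cons)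
  qed
  also have "\<dots> = tmult (lin iota2 (DW w)) (lin iota2 (DT ws))" using lin_DH_iota_word_eq[OF w] Cons.IH[OF ws] by simp
  also have "\<dots> = lin iota2 (tmult (DW w) (DT ws))"
    by (rule lin_tmult[OF finite_supp_DW finite_supp_DT, symmetric]) (simp add: iota2_append case_prod_beta)
  also have "\<dots> = lin iota2 (DT (w # ws))" by (simp add: DT_def)
  finally show ?case .
qed

lemma tens1_eq_delta: "tens1 (\<lambda>b. if b = [w] then 1 else 0) = delta ([w], [])"
  by (rule ext) (auto simp: tens1_def vone_def delta_def split: if_splits)

lemma finite_supp_tens1: "finite (supp (tens1 (\<lambda>b. if b = [w] then 1 else 0)))"
  unfolding tens1_eq_delta by (rule finite_subset[of _ "{([w], [])}"]) (auto simp: supp_def delta_def split: if_splits)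

lemma iota_coalgebra_morphism:
  assumes fx: "finite (supp x)" and nonempty: "\<And>b. x b \<noteq> 0 \<Longrightarrow> \<forall>u\<in>set b. u \<noteq> []"
  shows "lin DH (lin iota x) = lin iota2 (lin DT x)"
proof -
  have "lin DH (lin iota x) = lin (\<lambda>b. lin DH (iota b)) x"
    using fx finite_supp_iota by (rule lin_lin)
  also have "\<dots> = lin (\<lambda>b. lin iota2 (DT b)) x"
    using nonempty lin_DH_iota by (intro lin_cong) blast
  also have "\<dots> = lin iota2 (lin DT x)"
    using fx finite_supp_DT by (rule lin_lin[symmetric])
  finally show ?thesis .
qed

lemma iota_codendriform_morphism:
  assumes w: "w \<noteq> []"
  shows "lin iota2 (DWprec w) = DHprec (iota [w])"
proof -
  have "lin iota2 (DWprec w) =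
      (\<lambda>d. lin iota2 (DWplus w) d - lin iota2 (tens1 (\<lambda>b. if b = [w] then 1 else 0)) d)"
    unfolding DWprec_def by (rule lin_diff[OF finite_supp_DWplus finite_supp_tens1])
  also have "\<dots> = (\<lambda>d. lin DHplus1 (iota [w]) d - iota2 ([w], []) d)"
    by (simp add: lin_DHplus1_iota_word_eq[OF w] iota_single tens1_eq_delta lin_delta)
  also have "\<dots> = DHprec (iota [w])"
    by (rule ext) (auto simp: DHprec_def tens1_def iota2_def iota_Nil)
  finally show ?thesis .
qed

theorem mainTheorem9:
  shows "(\<forall>x :: 'a list list \<Rightarrow> complex.
            finite {b. x b \<noteq> 0} \<and> (\<forall>b. x b \<noteq> 0 \<longrightarrow> (\<forall>u\<in>set b. u \<noteq> []))
            \<longrightarrow> lin DH (lin iota x) = lin iota2 (lin DT x))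
       \<and> (\<forall>w :: 'a list. w \<noteq> [] \<longrightarrow> lin iota2 (DWprec w) = DHprec (iota [w]))"
  using iota_coalgebra_morphism iota_codendriform_morphism by (auto simp: supp_def)
end
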